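(* Let $\alpha>0$, $\beta>0$, $M\in\mathbb{R}$, and let $H:=\frac12\bigl(\frac{6\alpha}{\beta M^2}\bigr)^{1/3}$, $V:=MH$ (with the understanding that the canonical staircase $S_{H,V}$ is identically $0$ when $M=0$). Then the set of entire local minimizers of $\mathcal{G}(\alpha,\beta,Mx,\cdot,\cdot)$ coincides with the set $\mathrm{Obl}(H,V)$ of oblique translations of $S_{H,V}$ (in particular, when $M=0$ the only entire local minimizer is the zero function).
   Context: For a bounded interval $(a,b)$, $S((a,b))$ is the space of step functions with finitely many jumps (BV functions with zero diffuse derivative and finite jump set $S_u$), with $u(a),u(b)$ denoting the values near the endpoints; $S_{loc}(\mathbb{R})$ is the set of $u:\mathbb{R}\to\mathbb{R}$ whose restriction to every bounded interval lies in $S((a,b))$. $\mathcal{G}(\alpha,\beta,f,(a,b),u)=\alpha\,\#(S_u\cap(a,b))+\beta\int_a^b(u-f)^2dx$. A function $v\in S((a,b))$ is a local minimizer of $\mathcal{G}(\alpha,\beta,f,(a,b),\cdot)$ if $\mathcal{G}(\alpha,\beta,f,(a,b),v)\le\mathcal{G}(\alpha,\beta,f,(a,b),u)$ for all $u\in S((a,b))$ with $u(a)=v(a)$, $u(b)=v(b)$; $v\in S_{loc}(\mathbb{R})$ is an entire local minimizer if its restriction to every bounded interval is a local minimizer there. Here $f$ is $x\mapsto Mx$. Canonical staircase: $S(x)=2\lfloor(x+1)/2\rfloor$, $S_{H,V}(x)=V\,S(x/H)$; $\mathrm{Obl}(H,V)$ is the set of functions $x\mapsto S_{H,V}(x-H\tau_0)+V\tau_0$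 with $\tau_0\in[-1,1]$. *)

theory Defs
  imports "HOL-Analysis.Analysis"
begin

text \<open>Functions are real-valued functions on the real line; as in BV theory they are
  only relevant up to Lebesgue-null sets. The jump set consists of the points near which
  u is not (a.e.) constant; for step functions these are exactly the jump points.\<close>

definition jump_set :: "(real \<Rightarrow> real) \<Rightarrow> real set" where
  "jump_set u = {x. \<not> (\<exists>\<epsilon>>0. \<exists>c. AE y in lebesgue. dist y x < \<epsilon> \<longrightarrow> u y = c)}"

definition step_on :: "real \<Rightarrow> real \<Rightarrow> (real \<Rightarrow> real) \<Rightarrow> bool" where
  "step_on a b u \<longleftrightarrow> finite (jump_set u \<inter> {a<..<b})"

definition trace_left :: "real \<Rightarrow> (real \<Rightarrow> real) \<Rightarrow> real" where
  "trace_left a u = (THE c. \<exists>\<epsilon>>0. AE y in lebesgue. y \<in> {a<..<a+\<epsilon>} \<longrightarrow> u y = c)"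

definition trace_right :: "real \<Rightarrow> (real \<Rightarrow> real) \<Rightarrow> real" where
  "trace_right b u = (THE c. \<exists>\<epsilon>>0. AE y in lebesgue. y \<in> {b-\<epsilon><..<b} \<longrightarrow> u y = c)"

definition G :: "real \<Rightarrow> real \<Rightarrow> (real \<Rightarrow> real) \<Rightarrow> real \<Rightarrow> real \<Rightarrow> (real \<Rightarrow> real) \<Rightarrow> real" where
  "G \<alpha> \<beta> f a b u = \<alpha> * real (card (jump_set u \<inter> {a<..<b}))
      + \<beta> * integral {a..b} (\<lambda>x. (u x - f x)\<^sup>2)"

definition local_min :: "real \<Rightarrow> real \<Rightarrow> (real \<Rightarrow> real) \<Rightarrow> real \<Rightarrow> real \<Rightarrow> (real \<Rightarrow> real) \<Rightarrow> bool" where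
  "local_min \<alpha> \<beta> f a b v \<longleftrightarrow> step_on a b v \<and>
     (\<forall>u. step_on a b u \<and> trace_left a u = trace_left a v \<and> trace_right b u = trace_right b v
          \<longrightarrow> G \<alpha> \<beta> f a b v \<le> G \<alpha> \<beta> f a b u)"

definition S_loc :: "(real \<Rightarrow> real) \<Rightarrow> bool" where
  "S_loc u \<longleftrightarrow> (\<forall>a b. a < b \<longrightarrow> step_on a b u)"

definition entire_local_min :: "real \<Rightarrow> real \<Rightarrow> (real \<Rightarrow> real) \<Rightarrow> (real \<Rightarrow> real) \<Rightarrow> bool" where
  "entire_local_min \<alpha> \<beta> f v \<longleftrightarrow> S_loc v \<and> (\<forall>a b. a < b \<longrightarrow> local_min \<alpha> \<beta> f a b v)"

text \<open>Canonical staircase. Note: for H = 0 (case M = 0) we get V = 0 and S_{H,V} = 0.\<close>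
definition staircase :: "real \<Rightarrow> real" where
  "staircase x = 2 * of_int \<lfloor>(x + 1) / 2\<rfloor>"

definition staircase_HV :: "real \<Rightarrow> real \<Rightarrow> real \<Rightarrow> real" where
  "staircase_HV H V x = V * staircase (x / H)"

definition Obl :: "real \<Rightarrow> real \<Rightarrow> (real \<Rightarrow> real) set" where
  "Obl H V = {(\<lambda>x. staircase_HV H V (x - H * \<tau>\<^sub>0) + V * \<tau>\<^sub>0) | \<tau>\<^sub>0. \<tau>\<^sub>0 \<in> {-1..1}}"

end

theory Submission
  imports Defs
begin

text \<open>A calibration \<open>\<Psi>(x, c)\<close>, whose \<open>x\<close>-derivative is bounded by the fidelity density
  \<open>\<beta> (c - M x)\<^sup>2\<close> and whose oscillation in \<open>c\<close> is at most \<open>\<alpha>\<close>, bounds the energy of every step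
  function on \<open>(a, b)\<close> from below by \<open>\<Psi>\<close> evaluated at the traces; the staircases with steps of
  length \<open>2 H\<close> centred on the line attain the bound, so they are entire local minimizers.
  Conversely, for an entire local minimizer, replacing a constant piece by the value of the line
  at its midpoint and shifting a jump are admissible competitors; they force every piece
  between two jumps to be centred on the line and every jump to lie where the line meets the mean
  of the adjacent values.  Hence the jumps are equally spaced and the minimizer is a staircase
  (zero if \<open>M = 0\<close>, since an unbounded constant piece costs too much).  Its period is \<open>2 H\<close>,
  because replacing \<open>N\<close> periods by \<open>N'\<close> periods of another length on a common interval shows
  that the period minimizes the cost per unit length \<open>(\<alpha> + \<beta> M\<^sup>2 l\<^sup>3 / 12) / l\<close>.\<close>

section \<open>Jump sets and traces\<close>

lemma AE_open_imp_ex: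
  fixes S :: "real set"
  assumes "open S" "S \<noteq> {}" "AE x in lebesgue. x \<in> S \<longrightarrow> P x"
  shows "\<exists>x\<in>S. P x"
proof (rule ccontr)
  assume "\<not> ?thesis"
  with assms(3) have "AE x in lebesgue. x \<in> S \<longrightarrow> x \<in> {}"
    by (auto elim: AE_mp)
  with assms(1,2) show False
    using mem_closed_if_AE_lebesgue_open[of S "{}"] by auto
qed

lemma AE_Ioo_imp_ex:
  fixes a b :: real
  assumes "a < b" "AE x in lebesgue. x \<in> {a<..<b} \<longrightarrow> P x"
  shows "\<exists>x\<in>{a<..<b}. P x"
  using AE_open_imp_ex[OF open_greaterThanLessThan _ assms(2)] assms(1) by auto

lemma AE_lebesgue_not_in_countable:
  assumes "countable C"
  shows "AE x in lebesgue. x \<notin> C"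
  using AE_not_in[OF countable_imp_null_set_lborel[OF assms]] by (rule AE_completion)

text \<open>The jump set and both traces are defined through a.e. values on shrinking neighbourhoods
  \<open>N \<epsilon>\<close>; the next two lemmas treat such families uniformly.\<close>

lemma AE_local_value_cong:
  fixes N :: "real \<Rightarrow> real \<Rightarrow> bool" and u w :: "real \<Rightarrow> real"
  assumes mono: "\<And>e e' y. e \<le> e' \<Longrightarrow> N e y \<Longrightarrow> N e' y"
    and "e > 0" and uw: "AE y in lebesgue. N e y \<longrightarrow> u y = w y"
  shows "(\<exists>\<epsilon>>0. AE y in lebesgue. N \<epsilon> y \<longrightarrow> u y = c) \<longleftrightarrow>
         (\<exists>\<epsilon>>0. AE y in lebesgue. N \<epsilon> y \<longrightarrow> w y = c)"
proof -
  have transfer: "\<exists>\<epsilon>>0. AE y in lebesgue. N \<epsilon> y \<longrightarrow> w' y = c"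
    if "AE y in lebesgue. N e y \<longrightarrow> u' y = w' y" "\<epsilon> > 0" "AE y in lebesgue. N \<epsilon> y \<longrightarrow> u' y = c"
    for u' w' :: "real \<Rightarrow> real" and \<epsilon>
  proof -
    have "AE y in lebesgue. N (min e \<epsilon>) y \<longrightarrow> w' y = c"
      using that(1,3) by eventually_elim (metis min.cobounded1 min.cobounded2 mono)
    then show ?thesis
      using \<open>e > 0\<close> \<open>\<epsilon> > 0\<close> by (intro exI[of _ "min e \<epsilon>"]) auto
  qed
  have wu: "AE y in lebesgue. N e y \<longrightarrow> w y = u y"
    using uw by eventually_elim auto
  show ?thesis
    using transfer[OF uw] transfer[OF wu] by blast
qed

lemma THE_local_value_eq:
  fixes N :: "real \<Rightarrow> real \<Rightarrow> bool" and u :: "real \<Rightarrow> real"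
  assumes mono: "\<And>e e' y. e \<le> e' \<Longrightarrow> N e y \<Longrightarrow> N e' y"
    and interval: "\<And>e. e > 0 \<Longrightarrow> \<exists>s t. s < t \<and> (\<forall>y\<in>{s<..<t}. N e y)"
    and "e > 0" and c: "AE y in lebesgue. N e y \<longrightarrow> u y = c"
  shows "(THE c. \<exists>\<epsilon>>0. AE y in lebesgue. N \<epsilon> y \<longrightarrow> u y = c) = c"
proof (rule the_equality)
  show "\<exists>\<epsilon>>0. AE y in lebesgue. N \<epsilon> y \<longrightarrow> u y = c"
    using \<open>e > 0\<close> c by blast
next
  fix c' assume "\<exists>\<epsilon>>0. AE y in lebesgue. N \<epsilon> y \<longrightarrow> u y = c'"
  then obtain e' where "e' > 0" and c': "AE y in lebesgue. N e' y \<longrightarrow> u y = c'"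
    by blast
  obtain s t where "s < t" and st: "\<forall>y\<in>{s<..<t}. N (min e e') y"
    using interval[of "min e e'"] \<open>e > 0\<close> \<open>e' > 0\<close> by auto
  have "AE y in lebesgue. y \<in> {s<..<t} \<longrightarrow> u y = c \<and> u y = c'"
    using c c' by eventually_elim (metis st min.cobounded1 min.cobounded2 mono)
  then show "c' = c"
    using AE_Ioo_imp_ex[OF \<open>s < t\<close>] by fastforce
qed

lemma trace_left_eqI:
  assumes "e > 0" "AE y in lebesgue. y \<in> {a<..<a+e} \<longrightarrow> u y = c"
  shows "trace_left a u = c"
  unfolding trace_left_def
proof (rule THE_local_value_eq[where N="\<lambda>e y. y \<in> {a<..<a+e}", OF _ _ assms])
  show "\<exists>s t. s < t \<and> (\<forall>y\<in>{s<..<t}. y \<in> {a<..<a+e})" if "e > 0" for e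
    using that by (intro exI[of _ "a"] exI[of _ "a+e"]) auto
qed auto

lemma trace_right_eqI:
  assumes "e > 0" "AE y in lebesgue. y \<in> {b-e<..<b} \<longrightarrow> u y = c"
  shows "trace_right b u = c"
  unfolding trace_right_def
proof (rule THE_local_value_eq[where N="\<lambda>e y. y \<in> {b-e<..<b}", OF _ _ assms])
  show "\<exists>s t. s < t \<and> (\<forall>y\<in>{s<..<t}. y \<in> {b-e<..<b})" if "e > 0" for e
    using that by (intro exI[of _ "b-e"] exI[of _ "b"]) auto
qed auto

lemma trace_left_cong:
  assumes "e > 0" "AE y in lebesgue. y \<in> {a<..<a+e} \<longrightarrow> u y = w y"
  shows "trace_left a u = trace_left a w"
  unfolding trace_left_def
  by (subst AE_local_value_cong[where N="\<lambda>e y. y \<in> {a<..<a+e}", OF _ assms]) auto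

lemma trace_right_cong:
  assumes "e > 0" "AE y in lebesgue. y \<in> {b-e<..<b} \<longrightarrow> u y = w y"
  shows "trace_right b u = trace_right b w"
  unfolding trace_right_def
  by (subst AE_local_value_cong[where N="\<lambda>e y. y \<in> {b-e<..<b}", OF _ assms]) auto

lemma jump_set_cong:
  assumes "e > 0" "AE y in lebesgue. dist y x < e \<longrightarrow> u y = w y"
  shows "x \<in> jump_set u \<longleftrightarrow> x \<in> jump_set w"
proof -
  have "(\<exists>\<epsilon>>0. AE y in lebesgue. dist y x < \<epsilon> \<longrightarrow> u y = c) \<longleftrightarrow>
        (\<exists>\<epsilon>>0. AE y in lebesgue. dist y x < \<epsilon> \<longrightarrow> w y = c)" for c
    by (rule AE_local_value_cong[where N="\<lambda>e y. dist y x < e", OF _ assms]) auto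
  then show ?thesis
    unfolding jump_set_def by blast
qed

lemma not_in_jump_setI:
  assumes "e > 0" "AE y in lebesgue. dist y x < e \<longrightarrow> u y = c"
  shows "x \<notin> jump_set u"
  using assms unfolding jump_set_def by blast

lemma not_in_jump_set_if_same_sides:
  assumes "e > 0" "AE y in lebesgue. y \<in> {x-e<..<x} \<longrightarrow> u y = c"
    "AE y in lebesgue. y \<in> {x<..<x+e} \<longrightarrow> u y = c"
  shows "x \<notin> jump_set u"
proof -
  have "AE y in lebesgue. y \<notin> {x}"
    by (rule AE_lebesgue_not_in_countable) auto
  then have "AE y in lebesgue. dist y x < e \<longrightarrow> u y = c"
    using assms(2,3) by eventually_elim (auto simp: dist_real_def abs_less_iff)
  then show ?thesis
    by (rule not_in_jump_setI[OF assms(1)])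
qed

lemma in_jump_setI:
  assumes "e > 0" "AE y in lebesgue. y \<in> {x-e<..<x} \<longrightarrow> u y = c1"
    "AE y in lebesgue. y \<in> {x<..<x+e} \<longrightarrow> u y = c2" "c1 \<noteq> c2"
  shows "x \<in> jump_set u"
proof (rule ccontr)
  assume "x \<notin> jump_set u"
  then obtain e' c where "e' > 0" and c: "AE y in lebesgue. dist y x < e' \<longrightarrow> u y = c"
    unfolding jump_set_def by blast
  have "AE y in lebesgue. y \<in> {x - min e e'<..<x} \<longrightarrow> u y = c1 \<and> u y = c"
    using assms(2) c by eventually_elim (auto simp: dist_real_def)
  moreover have "AE y in lebesgue. y \<in> {x<..<x + min e e'} \<longrightarrow> u y = c2 \<and> u y = c"
    using assms(3) c by eventually_elim (auto simp: dist_real_def)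
  ultimately show False
    using AE_Ioo_imp_ex[of "x - min e e'" x] AE_Ioo_imp_ex[of x "x + min e e'"]
      \<open>e > 0\<close> \<open>e' > 0\<close> assms(4) by force
qed

lemma AE_if_locally_AE:
  fixes S :: "real set"
  assumes "\<And>x. x \<in> S \<Longrightarrow> \<exists>e>0. AE y in lebesgue. y \<in> ball x e \<longrightarrow> P y"
  shows "AE y in lebesgue. y \<in> S \<longrightarrow> P y"
proof -
  obtain rad where rad: "\<And>x. x \<in> S \<Longrightarrow> rad x > 0"
    and local: "\<And>x. x \<in> S \<Longrightarrow> AE y in lebesgue. y \<in> ball x (rad x) \<longrightarrow> P y"
    using assms by metis
  obtain \<F> where \<F>: "\<F> \<subseteq> (\<lambda>x. ball x (rad x)) ` S" "countable \<F>"
    and cover: "\<Union>\<F> = (\<Union>x\<in>S. ball x (rad x))"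
    using Lindelof[of "(\<lambda>x. ball x (rad x)) ` S"] by auto
  have "\<forall>B\<in>\<F>. AE y in lebesgue. y \<in> B \<longrightarrow> P y"
  proof
    fix B assume "B \<in> \<F>"
    then obtain x where "x \<in> S" "B = ball x (rad x)"
      using \<F>(1) by blast
    then show "AE y in lebesgue. y \<in> B \<longrightarrow> P y"
      using local by simp
  qed
  then have AE_cover: "AE y in lebesgue. \<forall>B\<in>\<F>. y \<in> B \<longrightarrow> P y"
    by (rule AE_ball_countable[OF \<F>(2), THEN iffD2])
  have S_cover: "S \<subseteq> \<Union>\<F>"
  proof
    fix y assume "y \<in> S"
    then have "y \<in> ball y (rad y)"
      using rad by simp
    then show "y \<in> \<Union>\<F>"
      unfolding cover using \<open>y \<in> S\<close> by blast
  qed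
  from AE_cover show ?thesis
    by eventually_elim (use S_cover in blast)
qed

lemma AE_const_if_no_jumps:
  fixes S :: "real set"
  assumes "open S" "connected S" "S \<inter> jump_set u = {}"
  shows "\<exists>c. AE y in lebesgue. y \<in> S \<longrightarrow> u y = c"
proof (cases "S = {}")
  case False
  then obtain x0 where "x0 \<in> S" by blast
  have "\<exists>e c. e > 0 \<and> (AE y in lebesgue. y \<in> ball x e \<longrightarrow> u y = c)" if x: "x \<in> S" for x
  proof -
    have "x \<notin> jump_set u"
      using assms(3) x by blast
    then obtain e c where "e > 0" "AE y in lebesgue. dist y x < e \<longrightarrow> u y = c"
      unfolding jump_set_def by auto
    then show ?thesis
      by (intro exI[of _ e] exI[of _ c]) (simp add: dist_commute)
  qed
  then obtain rad val where rad: "\<And>x. x \<in> S \<Longrightarrow> rad x > 0"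
    and val: "\<And>x. x \<in> S \<Longrightarrow> AE y in lebesgue. y \<in> ball x (rad x) \<longrightarrow> u y = val x"
    by metis
  have val_near: "val y = val x" if "x \<in> S" "y \<in> S" "y \<in> ball x (rad x)" for x y
  proof -
    have "AE z in lebesgue. z \<in> ball x (rad x) \<inter> ball y (rad y) \<longrightarrow> u z = val x \<and> u z = val y"
      using val[OF that(1)] val[OF that(2)] by eventually_elim auto
    moreover have "y \<in> ball x (rad x) \<inter> ball y (rad y)"
      using that rad by auto
    ultimately have "\<exists>z\<in>ball x (rad x) \<inter> ball y (rad y). u z = val x \<and> u z = val y"
      by (intro AE_open_imp_ex) auto
    then show ?thesis
      by auto
  qed
  have val_const: "val x = val x0" if "x \<in> S" for x
  proof (rule connected_local_const[OF assms(2) that \<open>x0 \<in> S\<close>])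
    show "\<forall>a\<in>S. \<forall>\<^sub>F b in at a within S. val a = val b"
    proof
      fix a assume "a \<in> S"
      have "val a = val b" if "b \<in> S" "dist b a < rad a" for b
        using val_near[OF \<open>a \<in> S\<close> that(1)] that(2) by (simp add: dist_commute)
      then show "\<forall>\<^sub>F b in at a within S. val a = val b"
        unfolding eventually_at using rad[OF \<open>a \<in> S\<close>] by (auto intro!: exI[of _ "rad a"])
    qed
  qed
  have "AE y in lebesgue. y \<in> S \<longrightarrow> u y = val x0"
  proof (rule AE_if_locally_AE)
    fix x assume "x \<in> S"
    then show "\<exists>e>0. AE y in lebesgue. y \<in> ball x e \<longrightarrow> u y = val x0"
      using rad[OF \<open>x \<in> S\<close>] val[OF \<open>x \<in> S\<close>] unfolding val_const[OF \<open>x \<in> S\<close>] by blast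
  qed
  then show ?thesis ..
qed simp

lemma jump_set_AE_cong:
  assumes "AE x in lebesgue. u x = w x"
  shows "jump_set u = jump_set w"
proof -
  have "AE y in lebesgue. dist y x < 1 \<longrightarrow> u y = w y" for x
    using assms by eventually_elim auto
  then have "x \<in> jump_set u \<longleftrightarrow> x \<in> jump_set w" for x
    using jump_set_cong[of 1 x u w] by simp
  then show ?thesis
    by blast
qed

lemma trace_AE_cong:
  assumes "AE x in lebesgue. u x = w x"
  shows "trace_left a u = trace_left a w" "trace_right a u = trace_right a w"
proof -
  have "AE y in lebesgue. P y \<longrightarrow> u y = w y" for P
    using assms by eventually_elim auto
  then show "trace_left a u = trace_left a w" "trace_right a u = trace_right a w"
    using trace_left_cong[of 1 a u w] trace_right_cong[of 1 a u w] by simp_all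
qed

lemma G_AE_cong:
  assumes "AE x in lebesgue. u x = w x"
  shows "G \<alpha> \<beta> f a b u = G \<alpha> \<beta> f a b w"
proof -
  obtain N where "negligible N" and N: "{x. u x \<noteq> w x} \<subseteq> N"
    using assms unfolding eventually_ae_filter_negligible by blast
  have "u x = w x" if "x \<notin> N" for x
    using N that by blast
  then have "integral {a..b} (\<lambda>x. (u x - f x)\<^sup>2) = integral {a..b} (\<lambda>x. (w x - f x)\<^sup>2)"
    using \<open>negligible N\<close> by (intro integral_spike[of N]) auto
  then show ?thesis
    unfolding G_def jump_set_AE_cong[OF assms] by simp
qed

lemma entire_local_min_AE_cong:
  assumes "AE x in lebesgue. u x = w x"
  shows "entire_local_min \<alpha> \<beta> f u \<longleftrightarrow> entire_local_min \<alpha> \<beta> f w"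
  unfolding entire_local_min_def local_min_def S_loc_def step_on_def
  using jump_set_AE_cong[OF assms] trace_AE_cong[OF assms] G_AE_cong[OF assms] by simp

section \<open>Step functions and the functional\<close>

definition fidelity :: "real \<Rightarrow> real \<Rightarrow> real \<Rightarrow> real \<Rightarrow> real" where
  "fidelity M c s t = c\<^sup>2 * (t - s) - c * M * (t\<^sup>2 - s\<^sup>2) + M\<^sup>2 * (t^3 - s^3) / 3"

lemma fidelity_has_integral:
  fixes s t :: real
  assumes "s \<le> t"
  shows "((\<lambda>y. (c - M*y)\<^sup>2) has_integral fidelity M c s t) {s..t}"
proof -
  let ?F = "\<lambda>y. c\<^sup>2 * y - c * M * y\<^sup>2 + M\<^sup>2 * y^3 / 3"
  have "(?F has_vector_derivative (c - M*y)\<^sup>2) (at y within {s..t})" for y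
    unfolding has_real_derivative_iff_has_vector_derivative[symmetric]
    by (auto intro!: derivative_eq_intros simp: power2_eq_square algebra_simps)
  from fundamental_theorem_of_calculus[OF assms this]
  have "((\<lambda>y. (c - M*y)\<^sup>2) has_integral ?F t - ?F s) {s..t}" .
  moreover have "?F t - ?F s = fidelity M c s t"
    by (simp add: fidelity_def algebra_simps diff_divide_distrib)
  ultimately show ?thesis
    by simp
qed

lemma fidelity_diff:
  "fidelity M c s t - fidelity M d s t = (t - s) * (c - d) * (c + d - M * (s + t))"
  by (simp add: fidelity_def power2_eq_square algebra_simps)

lemma fidelity_shift:
  assumes "M \<noteq> 0"
  shows "fidelity M c s t = M\<^sup>2 * ((t - c/M)^3 - (s - c/M)^3) / 3"
  using assms by (simp add: fidelity_def power2_eq_square power3_eq_cube field_simps)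

lemma jump_set_Int_Ioo_empty_if_AE_const:
  assumes "AE y in lebesgue. y \<in> {a<..<b} \<longrightarrow> u y = c"
  shows "jump_set u \<inter> {a<..<b} = {}"
proof -
  have "x \<notin> jump_set u" if "a < x" "x < b" for x
  proof (rule not_in_jump_setI)
    show "min (x - a) (b - x) > 0"
      using that by simp
    show "AE y in lebesgue. dist y x < min (x - a) (b - x) \<longrightarrow> u y = c"
      using assms by eventually_elim (auto simp: dist_real_def abs_less_iff)
  qed
  then show ?thesis
    by auto
qed

lemma has_integral_if_AE_const:
  fixes a b :: real
  assumes "a \<le> b" "AE y in lebesgue. y \<in> {a<..<b} \<longrightarrow> u y = c"
  shows "((\<lambda>x. (u x - M*x)\<^sup>2) has_integral fidelity M c a b) {a..b}"
proof -
  obtain N where "negligible N" and N: "{y. \<not> (y \<in> {a<..<b} \<longrightarrow> u y = c)} \<subseteq> N"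
    using assms(2) unfolding eventually_ae_filter_negligible by blast
  have "u x = c" if "x \<in> {a<..<b}" "x \<notin> N" for x
    using N that by blast
  moreover have "negligible (N \<union> {a, b})"
    using \<open>negligible N\<close> by (simp add: negligible_insert)
  ultimately show ?thesis
    by (intro has_integral_spike[where S="N \<union> {a, b}", OF _ _ fidelity_has_integral[OF assms(1)]]) auto
qed

lemma trace_if_AE_const:
  fixes a b :: real
  assumes "a < b" "AE y in lebesgue. y \<in> {a<..<b} \<longrightarrow> u y = c"
  shows "trace_left a u = c" "trace_right b u = c"
  using assms by (auto intro!: trace_left_eqI[of "b - a"] trace_right_eqI[of "b - a"])

lemma step_induct[consumes 2, case_names const split]:
  fixes a b :: real
  assumes "a < b" "finite (jump_set u \<inter> {a<..<b})"
    and const: "\<And>a b c. a < b \<Longrightarrow> (AE y in lebesgue. y \<in> {a<..<b} \<longrightarrow> u y = c) \<Longrightarrow> Q a b"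
    and split: "\<And>a m b. a < m \<Longrightarrow> m < b \<Longrightarrow> m \<in> jump_set u \<Longrightarrow>
        finite (jump_set u \<inter> {a<..<b}) \<Longrightarrow> Q a m \<Longrightarrow> Q m b \<Longrightarrow> Q a b"
  shows "Q a b"
  using assms(1,2)
proof (induction "card (jump_set u \<inter> {a<..<b})" arbitrary: a b rule: less_induct)
  case (less a b)
  show ?case
  proof (cases "jump_set u \<inter> {a<..<b} = {}")
    case True
    then obtain c where "AE y in lebesgue. y \<in> {a<..<b} \<longrightarrow> u y = c"
      using AE_const_if_no_jumps[of "{a<..<b}" u] by (auto simp: Int_commute)
    then show ?thesis
      using const less.prems(1) by blast
  next
    case False
    then obtain m where m: "m \<in> jump_set u" "a < m" "m < b"
      by auto
    have "jump_set u \<inter> {a<..<m} \<subset> jump_set u \<inter> {a<..<b}"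
      "jump_set u \<inter> {m<..<b} \<subset> jump_set u \<inter> {a<..<b}"
      using m by auto
    with less.prems(2) have "Q a m" "Q m b"
      using m by (auto intro!: less.hyps dest: psubset_card_mono intro: finite_subset)
    then show ?thesis
      using split m less.prems(2) by blast
  qed
qed

lemma step_integrable:
  fixes a b :: real
  assumes "a < b" "finite (jump_set u \<inter> {a<..<b})"
  shows "(\<lambda>x. (u x - M*x)\<^sup>2) integrable_on {a..b}"
  using assms
proof (induction rule: step_induct)
  case (const a b c)
  then show ?case
    using has_integral_if_AE_const[of a b u c M] by (auto simp: has_integral_integrable)
next
  case (split a m b)
  then show ?case
    using Henstock_Kurzweil_Integration.integrable_combine[of a m b] by auto
qed

lemma card_Int_Ioo_split:
  fixes a m b :: real
  assumes "a < m" "m < b" "finite (J \<inter> {a<..<b})"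
  shows "card (J \<inter> {a<..<b}) =
    card (J \<inter> {a<..<m}) + card (J \<inter> {m<..<b}) + (if m \<in> J then 1 else 0)"
proof -
  have eq: "J \<inter> {a<..<b} = (J \<inter> {a<..<m}) \<union> (J \<inter> {m<..<b}) \<union> (J \<inter> {m})"
    using assms by auto
  have "finite (J \<inter> {a<..<m})" "finite (J \<inter> {m<..<b})"
    by (rule finite_subset[OF _ assms(3)]; use assms in auto)+
  then show ?thesis
    unfolding eq by (subst card_Un_disjoint; auto simp: card_Un_disjoint)+
qed

lemma G_split:
  fixes a m b :: real
  assumes "a < m" "m < b" "finite (jump_set u \<inter> {a<..<b})"
  shows "G \<alpha> \<beta> (\<lambda>x. M * x) a b u =
    G \<alpha> \<beta> (\<lambda>x. M * x) a m u + G \<alpha> \<beta> (\<lambda>x. M * x) m b u + (if m \<in> jump_set u then \<alpha> else 0)"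
proof -
  have "(\<lambda>x. (u x - M*x)\<^sup>2) integrable_on {a..b}"
    using step_integrable[of a b u M] assms by simp
  then have "integral {a..b} (\<lambda>x. (u x - M*x)\<^sup>2) =
      integral {a..m} (\<lambda>x. (u x - M*x)\<^sup>2) + integral {m..b} (\<lambda>x. (u x - M*x)\<^sup>2)"
    using assms by (intro Henstock_Kurzweil_Integration.integral_combine[symmetric]) auto
  then show ?thesis
    unfolding G_def card_Int_Ioo_split[OF assms] by (simp add: algebra_simps)
qed

lemma G_if_AE_const:
  fixes a b :: real
  assumes "a < b" "AE y in lebesgue. y \<in> {a<..<b} \<longrightarrow> u y = c"
  shows "G \<alpha> \<beta> (\<lambda>x. M * x) a b u = \<beta> * fidelity M c a b"
  unfolding G_def jump_set_Int_Ioo_empty_if_AE_const[OF assms(2)]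
  using integral_unique[OF has_integral_if_AE_const[OF _ assms(2)]] assms(1) by simp

lemma G_nonneg:
  assumes "\<alpha> \<ge> 0" "\<beta> \<ge> 0"
  shows "G \<alpha> \<beta> f a b u \<ge> 0"
proof -
  have "integral {a..b} (\<lambda>x. (u x - f x)\<^sup>2) \<ge> 0"
    by (cases "(\<lambda>x. (u x - f x)\<^sup>2) integrable_on {a..b}")
       (auto intro: integral_nonneg simp: not_integrable_integral)
  then show ?thesis
    unfolding G_def using assms by auto
qed

section \<open>Calibration\<close>

definition calib_core :: "real \<Rightarrow> real \<Rightarrow> real" where
  "calib_core H t = (let s = max (-H) (min H t) in s^3 / 3 - H\<^sup>2 * s)"

definition calib_defect :: "real \<Rightarrow> real \<Rightarrow> real" where
  "calib_defect H d = d^3 / 3 - H\<^sup>2 * d - calib_core H d"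

text \<open>The calibration: \<open>\<partial>\<^sub>x calibration \<beta> M H x c = \<beta> M\<^sup>2 s\<^sup>2\<close> with \<open>s\<close> the clamp of \<open>x - c/M\<close>
  to \<open>[-H, H]\<close>, which is at most the fidelity density \<open>\<beta> (c - M x)\<^sup>2 = \<beta> M\<^sup>2 (x - c/M)\<^sup>2\<close>,
  with equality iff \<open>|x - c/M| \<le> H\<close>; in \<open>c\<close> it oscillates by at most \<open>4/3 \<beta> M\<^sup>2 H\<^sup>3\<close>.\<close>

definition calibration :: "real \<Rightarrow> real \<Rightarrow> real \<Rightarrow> real \<Rightarrow> real \<Rightarrow> real" where
  "calibration \<beta> M H x c = \<beta> * M\<^sup>2 * H\<^sup>2 * x + \<beta> * M\<^sup>2 * calib_core H (x - c / M)"

lemma calib_core_bounds: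
  assumes "H \<ge> 0"
  shows "- 2 * H^3 / 3 \<le> calib_core H t" "calib_core H t \<le> 2 * H^3 / 3"
proof -
  define s where "s = max (-H) (min H t)"
  have s: "-H \<le> s" "s \<le> H"
    using assms by (auto simp: s_def)
  have core: "calib_core H t = s^3 / 3 - H\<^sup>2 * s"
    by (simp add: calib_core_def s_def Let_def)
  have "s^3 / 3 - H\<^sup>2 * s + 2 * H^3 / 3 = (s - H)\<^sup>2 * (s + 2*H) / 3"
    "2 * H^3 / 3 - (s^3 / 3 - H\<^sup>2 * s) = (s + H)\<^sup>2 * (2*H - s) / 3"
    by (simp_all add: power2_eq_square power3_eq_cube algebra_simps)
  moreover have "(s - H)\<^sup>2 * (s + 2*H) \<ge> 0" "(s + H)\<^sup>2 * (2*H - s) \<ge> 0"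
    using s assms by simp_all
  ultimately show "- 2 * H^3 / 3 \<le> calib_core H t" "calib_core H t \<le> 2 * H^3 / 3"
    unfolding core by linarith+
qed

lemma calib_core_H: "H \<ge> 0 \<Longrightarrow> calib_core H H = - 2 * H^3 / 3"
  and calib_core_minus_H: "H \<ge> 0 \<Longrightarrow> calib_core H (-H) = 2 * H^3 / 3"
  by (simp_all add: calib_core_def Let_def power3_eq_cube power2_eq_square)

lemma calib_defect_eq_0: "\<bar>d\<bar> \<le> H \<Longrightarrow> calib_defect H d = 0"
  by (simp add: calib_defect_def calib_core_def Let_def abs_le_iff)

lemma calib_defect_minus:
  assumes "H \<ge> 0"
  shows "calib_defect H (-d) = - calib_defect H d"
proof -
  have "max (-H) (min H (-d)) = - max (-H) (min H d)"
    using assms by (simp add: max_def min_def)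
  then show ?thesis
    by (simp add: calib_defect_def calib_core_def Let_def power3_eq_cube)
qed

lemma calib_defect_ge_H:
  assumes "H \<ge> 0" "H \<le> d"
  shows "calib_defect H d = (d - H)\<^sup>2 * (d + 2*H) / 3"
  using assms
  by (simp add: calib_defect_def calib_core_def Let_def power2_eq_square power3_eq_cube algebra_simps)

lemma calib_defect_mono_ge_H:
  assumes "H \<ge> 0" "H \<le> d1" "d1 \<le> d2"
  shows "calib_defect H d1 \<le> calib_defect H d2"
proof -
  have "(d1 - H)\<^sup>2 * (d1 + 2*H) \<le> (d2 - H)\<^sup>2 * (d2 + 2*H)"
    using assms by (intro mult_mono power_mono) auto
  then show ?thesis
    using assms by (simp add: calib_defect_ge_H)
qed

lemma calib_defect_mono:
  assumes "H \<ge> 0" "d1 \<le> d2"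
  shows "calib_defect H d1 \<le> calib_defect H d2"
proof -
  \<comment> \<open>The defect vanishes on \<open>[-H, H]\<close> and is odd, so it splits into two monotone halves.\<close>
  have split: "calib_defect H d = calib_defect H (max H d) - calib_defect H (max H (-d))" for d
    using calib_defect_eq_0[of _ H] calib_defect_minus[OF assms(1)] assms(1)
    by (cases "d \<le> - H"; cases "H \<le> d") (auto simp: max_def)
  have "calib_defect H (max H d1) \<le> calib_defect H (max H d2)"
    "calib_defect H (max H (-d2)) \<le> calib_defect H (max H (-d1))"
    using assms by (auto intro!: calib_defect_mono_ge_H)
  then show ?thesis
    using split[of d1] split[of d2] by linarith
qed

lemma fidelity_minus_calibration:
  assumes "M \<noteq> 0"
  shows "\<beta> * fidelity M c s t - (calibration \<beta> M H t c - calibration \<beta> M H s c) =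
    \<beta> * M\<^sup>2 * (calib_defect H (t - c/M) - calib_defect H (s - c/M))"
proof -
  define T S where "T = t - c/M" and "S = s - c/M"
  have "calibration \<beta> M H t c - calibration \<beta> M H s c =
      \<beta> * M\<^sup>2 * (H\<^sup>2 * (T - S) + calib_core H T - calib_core H S)"
    by (simp add: calibration_def T_def S_def algebra_simps)
  moreover have "\<beta> * fidelity M c s t = \<beta> * M\<^sup>2 * (T^3 - S^3) / 3"
    by (simp add: fidelity_shift[OF assms] T_def S_def)
  ultimately show ?thesis
    unfolding T_def[symmetric] S_def[symmetric] calib_defect_def by (simp add: algebra_simps diff_divide_distrib)
qed

lemma calibration_le_fidelity:
  assumes "M \<noteq> 0" "H \<ge> 0" "\<beta> \<ge> 0" "s \<le> t"
  shows "calibration \<beta> M H t c - calibration \<beta> M H s c \<le> \<beta> * fidelity M c s t"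
proof -
  have "calib_defect H (s - c/M) \<le> calib_defect H (t - c/M)"
    using assms by (intro calib_defect_mono) auto
  then have "0 \<le> \<beta> * M\<^sup>2 * (calib_defect H (t - c/M) - calib_defect H (s - c/M))"
    using assms(3) by simp
  then show ?thesis
    using fidelity_minus_calibration[OF assms(1), of \<beta> c s t H] by linarith
qed

lemma calibration_eq_fidelity:
  assumes "M \<noteq> 0" "c/M - H \<le> s" "t \<le> c/M + H" "s \<le> t"
  shows "calibration \<beta> M H t c - calibration \<beta> M H s c = \<beta> * fidelity M c s t"
  using fidelity_minus_calibration[OF assms(1), of \<beta> c s t H] assms(2-4)
  by (simp add: calib_defect_eq_0 abs_le_iff)

lemma calibration_jump_le:
  assumes "H \<ge> 0" "\<beta> \<ge> 0"
  shows "calibration \<beta> M H x c1 - calibration \<beta> M H x c2 \<le> 4/3 * \<beta> * M\<^sup>2 * H^3"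
proof -
  have "calib_core H (x - c1/M) - calib_core H (x - c2/M) \<le> 4/3 * H^3"
    using calib_core_bounds[OF assms(1), of "x - c1/M"] calib_core_bounds[OF assms(1), of "x - c2/M"]
    by linarith
  then have "\<beta> * M\<^sup>2 * (calib_core H (x - c1/M) - calib_core H (x - c2/M)) \<le> \<beta> * M\<^sup>2 * (4/3 * H^3)"
    using assms(2) by (intro mult_left_mono) auto
  then show ?thesis
    by (simp add: calibration_def algebra_simps)
qed

lemma calibration_jump_eq:
  assumes "H \<ge> 0" "M \<noteq> 0"
  shows "calibration \<beta> M H x (M * (x + H)) - calibration \<beta> M H x (M * (x - H)) = 4/3 * \<beta> * M\<^sup>2 * H^3"
proof -
  have offsets: "x - M * (x + H) / M = -H" "x - M * (x - H) / M = H"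
    using assms(2) by auto
  show ?thesis
    unfolding calibration_def offsets calib_core_H[OF assms(1)] calib_core_minus_H[OF assms(1)]
    by (simp add: algebra_simps)
qed

locale calibrated =
  fixes \<alpha> \<beta> M H :: real
  assumes M_nonzero: "M \<noteq> 0" and H_pos: "H > 0" and \<beta>_pos: "\<beta> > 0"
    and \<alpha>_eq: "\<alpha> = 4/3 * \<beta> * M\<^sup>2 * H^3"
begin

abbreviation "\<Psi> \<equiv> calibration \<beta> M H"

lemma G_ge_calibration:
  assumes "a < b" "step_on a b u"
  shows "\<Psi> b (trace_right b u) - \<Psi> a (trace_left a u) \<le> G \<alpha> \<beta> (\<lambda>x. M * x) a b u"
  using assms(1) assms(2)[unfolded step_on_def]
proof (induction rule: step_induct)
  case (const a b c)
  then show ?case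
    using G_if_AE_const[OF const] trace_if_AE_const[OF const]
      calibration_le_fidelity[OF M_nonzero, of H \<beta> a b c] H_pos \<beta>_pos by simp
next
  case (split a m b)
  have "\<Psi> m (trace_left m u) - \<Psi> m (trace_right m u) \<le> \<alpha>"
    using calibration_jump_le[of H \<beta> M m] H_pos \<beta>_pos by (simp add: \<alpha>_eq)
  then show ?case
    using G_split[OF split(1,2,4), of \<alpha> \<beta> M] split.IH split(3) by simp
qed

lemma AE_const_within_band:
  assumes "a < b" "AE y in lebesgue. y \<in> {a<..<b} \<longrightarrow> u y = c"
    and band: "\<And>x. \<bar>x - u x / M\<bar> \<le> H"
  shows "c/M - H \<le> a" "b \<le> c/M + H"
proof -
  have value_c: "\<exists>y\<in>{s<..<t}. u y = c" if "a \<le> s" "s < t" "t \<le> b" for s t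
  proof (rule AE_Ioo_imp_ex[OF \<open>s < t\<close>])
    show "AE y in lebesgue. y \<in> {s<..<t} \<longrightarrow> u y = c"
      using assms(2) by eventually_elim (use that in auto)
  qed
  show "c/M - H \<le> a"
  proof (rule ccontr)
    assume "\<not> ?thesis"
    then obtain y where "y < c/M - H" "u y = c"
      using value_c[of a "min b (c/M - H)"] assms(1) by auto
    then show False
      using band[of y] by (simp add: abs_le_iff)
  qed
  show "b \<le> c/M + H"
  proof (rule ccontr)
    assume "\<not> ?thesis"
    then obtain y where "c/M + H < y" "u y = c"
      using value_c[of "max a (c/M + H)" b] assms(1) by auto
    then show False
      using band[of y] by (simp add: abs_le_iff)
  qed
qed

lemma G_eq_calibration:
  assumes "a < b" "step_on a b u"
    and band: "\<And>x. \<bar>x - u x / M\<bar> \<le> H"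
    and jumps: "\<And>x. x \<in> jump_set u \<Longrightarrow> trace_right x u = M * (x - H) \<and> trace_left x u = M * (x + H)"
  shows "G \<alpha> \<beta> (\<lambda>x. M * x) a b u = \<Psi> b (trace_right b u) - \<Psi> a (trace_left a u)"
  using assms(1) assms(2)[unfolded step_on_def]
proof (induction rule: step_induct)
  case (const a b c)
  then show ?case
    using G_if_AE_const[OF const] trace_if_AE_const[OF const] AE_const_within_band[OF const band]
      calibration_eq_fidelity[OF M_nonzero] by simp
next
  case (split a m b)
  have "\<Psi> m (trace_left m u) - \<Psi> m (trace_right m u) = \<alpha>"
    using calibration_jump_eq[of H M \<beta> m] jumps[OF split(3)] H_pos M_nonzero \<alpha>_eq by simp
  then show ?case
    using G_split[OF split(1,2,4), of \<alpha> \<beta> M] split.IH split(3) by simp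
qed

lemma entire_local_min_if_calibrated:
  assumes "S_loc u"
    and band: "\<And>x. \<bar>x - u x / M\<bar> \<le> H"
    and jumps: "\<And>x. x \<in> jump_set u \<Longrightarrow> trace_right x u = M * (x - H) \<and> trace_left x u = M * (x + H)"
  shows "entire_local_min \<alpha> \<beta> (\<lambda>x. M * x) u"
  unfolding entire_local_min_def local_min_def
proof (intro conjI allI impI assms(1))
  fix a b :: real and w assume "a < b"
  then show "step_on a b u"
    using assms(1) by (simp add: S_loc_def)
  assume "step_on a b w \<and> trace_left a w = trace_left a u \<and> trace_right b w = trace_right b u"
  then show "G \<alpha> \<beta> (\<lambda>x. M * x) a b u \<le> G \<alpha> \<beta> (\<lambda>x. M * x) a b w"
    using G_eq_calibration[OF \<open>a < b\<close> \<open>step_on a b u\<close> band jumps] G_ge_calibration[OF \<open>a < b\<close>, of w]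
    by auto
qed

end

section \<open>Staircases\<close>

definition stair :: "real \<Rightarrow> real \<Rightarrow> real \<Rightarrow> real \<Rightarrow> real" where
  "stair M l z x = M * (z + l * of_int \<lfloor>(x - z) / l + 1/2\<rfloor>)"

lemma stair_eq:
  assumes "l > 0" "z + of_int k * l - l/2 \<le> x" "x < z + of_int k * l + l/2"
  shows "stair M l z x = M * (z + of_int k * l)"
proof -
  have "of_int k \<le> (x - z) / l + 1/2" "(x - z) / l + 1/2 < of_int k + 1"
    using assms by (auto simp: field_simps)
  then have "\<lfloor>(x - z) / l + 1/2\<rfloor> = k"
    by (simp add: floor_eq_iff)
  then show ?thesis
    by (simp add: stair_def mult.commute)
qed

lemma stair_step_index:
  fixes l z x :: real
  assumes "l > 0"
  obtains k :: int where "z + of_int k * l - l/2 \<le> x" "x < z + of_int k * l + l/2"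
proof -
  define k where "k = \<lfloor>(x - z) / l + 1/2\<rfloor>"
  have "of_int k \<le> (x - z) / l + 1/2" "(x - z) / l + 1/2 < of_int k + 1"
    unfolding k_def by linarith+
  then have "z + of_int k * l - l/2 \<le> x" "x < z + of_int k * l + l/2"
    using assms by (auto simp: field_simps)
  then show thesis
    using that by blast
qed

lemma AE_stair_on_step:
  assumes "l > 0"
  shows "AE y in lebesgue. y \<in> {z + of_int k * l - l/2<..<z + of_int k * l + l/2} \<longrightarrow>
    stair M l z y = M * (z + of_int k * l)"
  using assms by (intro AE_I2 impI stair_eq) auto

lemma stair_band:
  assumes "l > 0" "M \<noteq> 0"
  shows "\<bar>x - stair M l z x / M\<bar> \<le> l/2"
proof -
  obtain k :: int where k: "z + of_int k * l - l/2 \<le> x" "x < z + of_int k * l + l/2"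
    using stair_step_index[OF assms(1)] .
  have "stair M l z x / M = z + of_int k * l"
    using assms(2) by (simp add: stair_eq[OF assms(1) k])
  then show ?thesis
    unfolding abs_le_iff using k by linarith
qed

lemma stair_shift:
  assumes "l > 0"
  shows "stair M l (z + of_int k * l) = stair M l z"
proof
  fix x
  have "(x - (z + of_int k * l)) / l + 1/2 = ((x - z) / l + 1/2) - of_int k"
    using assms by (simp add: field_simps)
  then have index: "\<lfloor>(x - (z + of_int k * l)) / l + 1/2\<rfloor> = \<lfloor>(x - z) / l + 1/2\<rfloor> - k"
    by (simp only: floor_diff_of_int)
  show "stair M l (z + of_int k * l) x = stair M l z x"
    unfolding stair_def index by (simp add: algebra_simps)
qed

lemma jump_set_stair:
  assumes "l > 0" "M \<noteq> 0"
  shows "jump_set (stair M l z) = range (\<lambda>k::int. z + of_int k * l + l/2)"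
proof (intro equalityI subsetI)
  fix x assume x: "x \<in> jump_set (stair M l z)"
  obtain k :: int where k: "z + of_int k * l - l/2 \<le> x" "x < z + of_int k * l + l/2"
    using stair_step_index[OF assms(1)] .
  show "x \<in> range (\<lambda>k::int. z + of_int k * l + l/2)"
  proof (cases "x = z + of_int (k - 1) * l + l/2")
    case False
    moreover have "z + of_int (k - 1) * l + l/2 = z + of_int k * l - l/2"
      by (simp add: algebra_simps)
    ultimately have "x \<in> {z + of_int k * l - l/2<..<z + of_int k * l + l/2}"
      using k by auto
    then have "x \<notin> jump_set (stair M l z)"
      using jump_set_Int_Ioo_empty_if_AE_const[OF AE_stair_on_step[OF assms(1), of z k M]]
      by blast
    then show ?thesis
      using x by contradiction
  next
    case True
    then show ?thesis
      by (rule range_eqI)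
  qed
next
  fix x assume "x \<in> range (\<lambda>k::int. z + of_int k * l + l/2)"
  then obtain k :: int where x: "x = z + of_int k * l + l/2"
    by auto
  show "x \<in> jump_set (stair M l z)"
  proof (rule in_jump_setI[OF assms(1)])
    show "AE y in lebesgue. y \<in> {x - l<..<x} \<longrightarrow> stair M l z y = M * (z + of_int k * l)"
      using assms x by (intro AE_I2 impI stair_eq) auto
    show "AE y in lebesgue. y \<in> {x<..<x + l} \<longrightarrow> stair M l z y = M * (z + of_int (k + 1) * l)"
      using assms x by (intro AE_I2 impI stair_eq) (auto simp: algebra_simps)
    show "M * (z + of_int k * l) \<noteq> M * (z + of_int (k + 1) * l)"
      using assms by (simp add: algebra_simps)
  qed
qed

lemma S_loc_stair:
  assumes "l > 0" "M \<noteq> 0"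
  shows "S_loc (stair M l z)"
  unfolding S_loc_def step_on_def
proof (intro allI impI)
  fix a b :: real
  let ?K = "{\<lfloor>(a - z) / l\<rfloor> - 1 .. \<lceil>(b - z) / l\<rceil>}"
  have "jump_set (stair M l z) \<inter> {a<..<b} \<subseteq> (\<lambda>k. z + of_int k * l + l/2) ` ?K"
  proof
    fix x assume "x \<in> jump_set (stair M l z) \<inter> {a<..<b}"
    then obtain k :: int where k: "x = z + of_int k * l + l/2" "a < x" "x < b"
      unfolding jump_set_stair[OF assms] by auto
    then have "(a - z) / l < of_int k + 1/2" "of_int k + 1/2 < (b - z) / l"
      using assms(1) by (auto simp: field_simps)
    then have "k \<in> ?K"
      by simp linarith
    then show "x \<in> (\<lambda>k. z + of_int k * l + l/2) ` ?K"
      using k(1) by blast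
  qed
  then show "finite (jump_set (stair M l z) \<inter> {a<..<b})"
    by (rule finite_subset) simp
qed

lemma stair_traces_at_jump:
  assumes "l > 0" "x = z + of_int k * l + l/2"
  shows "trace_right x (stair M l z) = M * (x - l/2)" "trace_left x (stair M l z) = M * (x + l/2)"
proof -
  show "trace_right x (stair M l z) = M * (x - l/2)"
    using assms by (intro trace_right_eqI[of l] AE_I2 impI) (auto simp: stair_eq)
  have "stair M l z y = M * (x + l/2)" if "x < y" "y < x + l" for y
    using assms that stair_eq[of l z "k + 1" y M] by (simp add: algebra_simps)
  then show "trace_left x (stair M l z) = M * (x + l/2)"
    using assms(1) by (intro trace_left_eqI[of l] AE_I2) auto
qed

lemma stair_traces_at_centre:
  assumes "l > 0"
  shows "trace_left (z + of_int k * l) (stair M l z) = M * (z + of_int k * l)"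
    "trace_right (z + of_int k * l) (stair M l z) = M * (z + of_int k * l)"
  using assms by (auto intro!: trace_left_eqI[of "l/2"] trace_right_eqI[of "l/2"] AE_I2 stair_eq)

lemma AE_eq_stair_if_steps:
  assumes "l > 0"
    and steps: "\<And>k::int. AE y in lebesgue. y \<in> {p + of_int k * l<..<p + of_int k * l + l} \<longrightarrow>
      v y = M * (p + of_int k * l + l/2)"
  shows "AE y in lebesgue. v y = stair M l (p + l/2) y"
proof -
  have "AE y in lebesgue. \<forall>k\<in>(UNIV :: int set).
      y \<in> {p + of_int k * l<..<p + of_int k * l + l} \<longrightarrow> v y = M * (p + of_int k * l + l/2)"
    using steps by (subst AE_ball_countable) auto
  moreover have "AE y in lebesgue. y \<notin> range (\<lambda>k::int. p + of_int k * l)"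
    by (rule AE_lebesgue_not_in_countable) simp
  ultimately show ?thesis
  proof eventually_elim
    case (elim y)
    obtain k :: int where k: "p + l/2 + of_int k * l - l/2 \<le> y" "y < p + l/2 + of_int k * l + l/2"
      using stair_step_index[OF assms(1)] .
    moreover have "y \<noteq> p + of_int k * l"
      using elim(2) by auto
    ultimately have "v y = M * (p + of_int k * l + l/2)"
      using elim(1) by auto
    then show ?case
      using stair_eq[OF assms(1) k] by (simp add: algebra_simps)
  qed
qed

lemma (in calibrated) entire_local_min_stair:
  "entire_local_min \<alpha> \<beta> (\<lambda>x. M * x) (stair M (2*H) z)"
proof (rule entire_local_min_if_calibrated)
  show "S_loc (stair M (2*H) z)"
    using H_pos M_nonzero by (intro S_loc_stair) auto
  show "\<bar>x - stair M (2*H) z x / M\<bar> \<le> H" for x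
    using stair_band[of "2*H" M x z] H_pos M_nonzero by simp
  fix x assume "x \<in> jump_set (stair M (2*H) z)"
  then obtain k :: int where "x = z + of_int k * (2*H) + (2*H)/2"
    using jump_set_stair[of "2*H" M z] H_pos M_nonzero by auto
  then show "trace_right x (stair M (2*H) z) = M * (x - H) \<and> trace_left x (stair M (2*H) z) = M * (x + H)"
    using stair_traces_at_jump[of "2*H" x z k M] H_pos by simp
qed

lemma G_stair_period:
  fixes z :: real and k :: int
  assumes "l > 0" "M \<noteq> 0"
  defines "m \<equiv> z + of_int k * l"
  shows "G \<alpha> \<beta> (\<lambda>x. M * x) m (m + l) (stair M l z) = \<alpha> + \<beta> * M\<^sup>2 * l^3 / 12"
proof -
  let ?G = "G \<alpha> \<beta> (\<lambda>x. M * x)" and ?Z = "stair M l z"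
  have "m + l/2 \<in> jump_set ?Z"
    unfolding jump_set_stair[OF assms(1,2)] m_def by auto
  moreover have "finite (jump_set ?Z \<inter> {m<..<m + l})"
    using S_loc_stair[OF assms(1,2)] assms(1) by (simp add: S_loc_def step_on_def)
  ultimately have "?G m (m + l) ?Z = ?G m (m + l/2) ?Z + ?G (m + l/2) (m + l) ?Z + \<alpha>"
    using G_split[of m "m + l/2" "m + l"] assms(1) by simp
  also have "?G m (m + l/2) ?Z = \<beta> * fidelity M (M * m) m (m + l/2)"
    using assms(1) AE_stair_on_step[OF assms(1), of z k M] unfolding m_def
    by (intro G_if_AE_const) (auto elim!: AE_mp)
  also have "?G (m + l/2) (m + l) ?Z = \<beta> * fidelity M (M * (m + l)) (m + l/2) (m + l)"
    using assms(1) AE_stair_on_step[OF assms(1), of z "k + 1" M] unfolding m_def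
    by (intro G_if_AE_const) (auto elim!: AE_mp simp: algebra_simps)
  also have "fidelity M (M * m) m (m + l/2) = M\<^sup>2 * l^3 / 24"
    using assms(2) by (simp add: fidelity_shift power3_eq_cube)
  also have "fidelity M (M * (m + l)) (m + l/2) (m + l) = M\<^sup>2 * l^3 / 24"
    using assms(2) by (simp add: fidelity_shift power3_eq_cube)
  finally show ?thesis
    by (simp add: algebra_simps)
qed

lemma G_stair_periods:
  assumes "l > 0" "M \<noteq> 0" "n \<ge> 1"
  shows "G \<alpha> \<beta> (\<lambda>x. M * x) z (z + real n * l) (stair M l z) = real n * (\<alpha> + \<beta> * M\<^sup>2 * l^3 / 12)"
  using assms(3)
proof (induction n rule: dec_induct)
  case base
  then show ?case
    using G_stair_period[OF assms(1,2), of \<alpha> \<beta> z 0] by simp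
next
  case (step n)
  let ?G = "G \<alpha> \<beta> (\<lambda>x. M * x)" and ?Z = "stair M l z"
  have "z + real n * l \<notin> jump_set ?Z"
    using jump_set_Int_Ioo_empty_if_AE_const[OF AE_stair_on_step[OF assms(1), of z "int n" M]] assms(1)
    by auto
  moreover have "z < z + real n * l + l"
    using assms(1) by (simp add: add_nonneg_pos)
  then have "finite (jump_set ?Z \<inter> {z<..<z + real n * l + l})"
    using S_loc_stair[OF assms(1,2)] by (simp add: S_loc_def step_on_def)
  ultimately have "?G z (z + real n * l + l) ?Z = ?G z (z + real n * l) ?Z + ?G (z + real n * l) (z + real n * l + l) ?Z"
    using G_split[of z "z + real n * l" "z + real n * l + l"] assms(1) step(1) by simp
  also have "?G (z + real n * l) (z + real n * l + l) ?Z = \<alpha> + \<beta> * M\<^sup>2 * l^3 / 12"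
    using G_stair_period[OF assms(1,2), of \<alpha> \<beta> z "int n"] by simp
  also have "z + real n * l + l = z + real (Suc n) * l"
    by (simp add: algebra_simps)
  finally show ?case
    using step(3) by (simp add: algebra_simps)
qed

section \<open>Entire local minimizers\<close>

lemma obtain_next_in_locally_finite:
  fixes J :: "real set"
  assumes fin: "\<And>a b. finite (J \<inter> {a<..<b})" and "j \<in> J" "x < j"
  obtains q where "q \<in> J" "x < q" "J \<inter> {x<..<q} = {}"
proof -
  let ?F = "J \<inter> {x<..<j + 1}"
  have "finite ?F" "j \<in> ?F"
    using fin assms(2,3) by auto
  then have "Min ?F \<in> ?F" and min: "\<And>y. y \<in> ?F \<Longrightarrow> Min ?F \<le> y"
    using Min_in[of ?F] Min_le[of ?F] by blast+
  moreover have "J \<inter> {x<..<Min ?F} = {}"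
    using min \<open>Min ?F \<in> ?F\<close> by fastforce
  ultimately show thesis
    using that by auto
qed

lemma obtain_prev_in_locally_finite:
  fixes J :: "real set"
  assumes fin: "\<And>a b. finite (J \<inter> {a<..<b})" and "j \<in> J" "j < x"
  obtains p where "p \<in> J" "p < x" "J \<inter> {p<..<x} = {}"
proof -
  let ?F = "J \<inter> {j - 1<..<x}"
  have "finite ?F" "j \<in> ?F"
    using fin assms(2,3) by auto
  then have "Max ?F \<in> ?F" and max: "\<And>y. y \<in> ?F \<Longrightarrow> y \<le> Max ?F"
    using Max_in[of ?F] Max_ge[of ?F] by blast+
  moreover have "J \<inter> {Max ?F<..<x} = {}"
    using max \<open>Max ?F \<in> ?F\<close> by fastforce
  ultimately show thesis
    using that by auto
qed

lemma bounded_mul_sq_imp_zero: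
  fixes a b K :: real
  assumes bound: "\<And>R. R > 0 \<Longrightarrow> R * (a + b * R)\<^sup>2 \<le> K"
  shows "a = 0 \<and> b = 0"
proof -
  have "b = 0"
  proof (rule ccontr)
    assume "b \<noteq> 0"
    define R where "R = max (\<bar>K\<bar> + 1) ((\<bar>a\<bar> + 1) / \<bar>b\<bar>)"
    have "R > 0" "R \<ge> \<bar>K\<bar> + 1"
      by (auto simp: R_def)
    have "(\<bar>a\<bar> + 1) / \<bar>b\<bar> \<le> R"
      by (simp add: R_def)
    then have "\<bar>b\<bar> * R \<ge> \<bar>a\<bar> + 1"
      using \<open>b \<noteq> 0\<close> by (simp add: divide_le_eq mult.commute)
    then have "1 \<le> \<bar>a + b * R\<bar>"
      using \<open>R > 0\<close> by (simp add: abs_mult)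
    then have "1 \<le> (a + b * R)\<^sup>2"
      by (metis abs_le_square_iff abs_one one_power2)
    then have "R \<le> R * (a + b * R)\<^sup>2"
      using \<open>R > 0\<close> by (simp add: mult_le_cancel_left1)
    then show False
      using bound[OF \<open>R > 0\<close>] \<open>R \<ge> \<bar>K\<bar> + 1\<close> by linarith
  qed
  moreover have "a = 0"
  proof (rule ccontr)
    assume "a \<noteq> 0"
    define R where "R = (\<bar>K\<bar> + 1) / a\<^sup>2"
    have "R > 0" "R * a\<^sup>2 = \<bar>K\<bar> + 1"
      using \<open>a \<noteq> 0\<close> by (auto simp: R_def)
    then show False
      using bound[of R] \<open>b = 0\<close> by simp
  qed
  ultimately show ?thesis
    by blast
qed

lemma eq_0_if_abs_le_linear:
  fixes X K d0 :: real
  assumes "d0 > 0" "\<And>d. 0 < d \<Longrightarrow> d < d0 \<Longrightarrow> \<bar>X\<bar> \<le> K * d"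
  shows "X = 0"
proof -
  have "\<forall>\<^sub>F d in at_right 0. \<bar>X\<bar> \<le> K * d"
    unfolding eventually_at_right_field using assms by blast
  moreover have "((\<lambda>d. K * d) \<longlongrightarrow> 0) (at_right 0)"
    by (auto intro!: tendsto_eq_intros)
  ultimately have "\<bar>X\<bar> \<le> 0"
    using tendsto_le[OF trivial_limit_at_right_real _ tendsto_const] by blast
  then show ?thesis
    by simp
qed

lemma jump_set_replace_Ioo:
  "jump_set (\<lambda>x. if x \<in> {s<..<t} then d else v x) \<subseteq> (jump_set v - {s<..<t}) \<union> {s, t}"
proof
  let ?u = "\<lambda>x. if x \<in> {s<..<t} then d else v x"
  fix x assume x: "x \<in> jump_set ?u"
  consider "x < s" | "x \<in> {s, t}" | "s < x \<and> x < t" | "t < x"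
    by fastforce
  then show "x \<in> (jump_set v - {s<..<t}) \<union> {s, t}"
  proof cases
    case 1
    have "AE y in lebesgue. dist y x < s - x \<longrightarrow> ?u y = v y"
      by (rule AE_I2) (auto simp: dist_real_def)
    then show ?thesis
      using jump_set_cong[of "s - x" x ?u v] 1 x by auto
  next
    case 3
    have "AE y in lebesgue. dist y x < min (x - s) (t - x) \<longrightarrow> ?u y = d"
      by (rule AE_I2) (auto simp: dist_real_def)
    then show ?thesis
      using not_in_jump_setI[of "min (x - s) (t - x)" x ?u d] 3 x by auto
  next
    case 4
    have "AE y in lebesgue. dist y x < x - t \<longrightarrow> ?u y = v y"
      by (rule AE_I2) (auto simp: dist_real_def)
    then show ?thesis
      using jump_set_cong[of "x - t" x ?u v] 4 x by auto
  qed blast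
qed

lemma integral_replace_Ioo:
  fixes a s t b c d :: real
  assumes ast: "a < s" "s < t" "t < b" and fin: "finite (jump_set v \<inter> {a<..<b})"
    and v: "AE y in lebesgue. y \<in> {s<..<t} \<longrightarrow> v y = c"
  shows "integral {a..b} (\<lambda>x. ((if x \<in> {s<..<t} then d else v x) - M * x)\<^sup>2) =
    integral {a..b} (\<lambda>x. (v x - M * x)\<^sup>2) - fidelity M c s t + fidelity M d s t"
proof -
  let ?f = "\<lambda>w x. (w x - M * x)\<^sup>2" and ?u = "\<lambda>x. if x \<in> {s<..<t} then d else v x"
  have "?f v integrable_on {a..b}"
    using step_integrable[OF _ fin] ast by simp
  then have "?f v integrable_on {a..s}" "?f v integrable_on {t..b}"
    using ast by (auto intro: integrable_subinterval_real)
  then have left: "(?f v has_integral integral {a..s} (?f v)) {a..s}"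
    and right: "(?f v has_integral integral {t..b} (?f v)) {t..b}"
    by (auto intro: integrable_integral)
  moreover have "?f ?u x = ?f v x" if "x \<in> {a..s} \<union> {t..b}" for x
    using that by auto
  ultimately have "(?f ?u has_integral integral {a..s} (?f v)) {a..s}"
    "(?f ?u has_integral integral {t..b} (?f v)) {t..b}"
    by (auto intro: has_integral_eq)
  moreover have "(?f v has_integral fidelity M c s t) {s..t}"
    using has_integral_if_AE_const[OF _ v] ast by simp
  moreover have "(?f ?u has_integral fidelity M d s t) {s..t}"
    using ast by (intro has_integral_if_AE_const AE_I2) auto
  ultimately have "(?f v has_integral integral {a..s} (?f v) + fidelity M c s t + integral {t..b} (?f v)) {a..b}"
    "(?f ?u has_integral integral {a..s} (?f v) + fidelity M d s t + integral {t..b} (?f v)) {a..b}"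
    using ast left right by (auto intro!: has_integral_combine[of a t b] has_integral_combine[of a s t])
  then show ?thesis
    by (simp add: integral_unique)
qed

lemma card_swap_le:
  assumes "finite A" "x \<in> A" "B \<subseteq> (A - {x}) \<union> {y}"
  shows "card B \<le> card A"
proof -
  have "card B \<le> card ((A - {x}) \<union> {y})"
    using assms by (intro card_mono) auto
  also have "\<dots> \<le> card (A - {x}) + 1"
    using card_Un_le[of "A - {x}" "{y}"] by simp
  also have "\<dots> = card A"
    using assms(1,2) card_Diff1_less[of A x] by (simp add: card_Diff_singleton)
  finally show ?thesis .
qed

locale entire_minimizer =
  fixes \<alpha> \<beta> M :: real and v :: "real \<Rightarrow> real"
  assumes \<alpha>_pos: "\<alpha> > 0" and \<beta>_pos: "\<beta> > 0" and minimizer: "entire_local_min \<alpha> \<beta> (\<lambda>x. M * x) v"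
begin

abbreviation "J \<equiv> jump_set v"

lemma finite_jumps: "finite (J \<inter> {a<..<b})"
  using minimizer by (cases "a < b") (auto simp: entire_local_min_def S_loc_def step_on_def)

lemma replace_const_piece_le:
  assumes "a < s" "s < t" "t < b" and v: "AE y in lebesgue. y \<in> {s<..<t} \<longrightarrow> v y = c"
  shows "\<alpha> * card (J \<inter> {a<..<b}) + \<beta> * fidelity M c s t \<le>
    \<alpha> * card (jump_set (\<lambda>x. if x \<in> {s<..<t} then d else v x) \<inter> {a<..<b}) + \<beta> * fidelity M d s t"
proof -
  let ?u = "\<lambda>x. if x \<in> {s<..<t} then d else v x"
  have "jump_set ?u \<inter> {a<..<b} \<subseteq> (J \<inter> {a<..<b}) \<union> {s, t}"
    using jump_set_replace_Ioo[of s t d v] by blast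
  then have "step_on a b ?u"
    unfolding step_on_def using finite_jumps[of a b] by (simp add: finite_subset)
  moreover have "trace_left a ?u = trace_left a v"
    using assms(1) by (intro trace_left_cong[of "s - a"] AE_I2) auto
  moreover have "trace_right b ?u = trace_right b v"
    using assms(3) by (intro trace_right_cong[of "b - t"] AE_I2) auto
  moreover have "local_min \<alpha> \<beta> (\<lambda>x. M * x) a b v"
    using minimizer assms(1-3) by (simp add: entire_local_min_def)
  ultimately have "G \<alpha> \<beta> (\<lambda>x. M * x) a b v \<le> G \<alpha> \<beta> (\<lambda>x. M * x) a b ?u"
    unfolding local_min_def by auto
  then show ?thesis
    unfolding G_def integral_replace_Ioo[OF assms(1-3) finite_jumps v] by (simp add: algebra_simps)
qed

lemma AE_const_between:
  assumes "J \<inter> {p<..<q} = {}"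
  obtains c where "AE y in lebesgue. y \<in> {p<..<q} \<longrightarrow> v y = c"
  using AE_const_if_no_jumps[of "{p<..<q}" v] assms by (auto simp: Int_commute)

text \<open>The competitor replaces the piece by the value of the line at its midpoint: the left-hand
  side is the fidelity this saves, and only endpoints not already in \<open>J\<close> can become new jumps.\<close>

lemma const_piece_cost:
  assumes "s < t" and c: "AE y in lebesgue. y \<in> {s<..<t} \<longrightarrow> v y = c"
  shows "\<beta> * ((t - s) * (c - M * (s + t) / 2)\<^sup>2) \<le> \<alpha> * card ({s, t} - J)"
proof -
  let ?d = "M * (s + t) / 2"
  let ?u = "\<lambda>x. if x \<in> {s<..<t} then ?d else v x"
  have ab: "s - 1 < s" "t < t + 1"
    by simp_all
  let ?I = "{s - 1<..<t + 1}"
  have "jump_set ?u \<inter> ?I \<subseteq> (J \<inter> ?I) \<union> ({s, t} - J)"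
    using jump_set_replace_Ioo[of s t ?d v] by blast
  then have "card (jump_set ?u \<inter> ?I) \<le> card ((J \<inter> ?I) \<union> ({s, t} - J))"
    using finite_jumps by (intro card_mono) auto
  also have "\<dots> \<le> card (J \<inter> ?I) + card ({s, t} - J)"
    by (rule card_Un_le)
  finally have "card (jump_set ?u \<inter> ?I) \<le> card (J \<inter> ?I) + card ({s, t} - J)" .
  then have "\<alpha> * card (jump_set ?u \<inter> {s - 1<..<t + 1}) \<le>
      \<alpha> * card (J \<inter> {s - 1<..<t + 1}) + \<alpha> * card ({s, t} - J)"
    using \<alpha>_pos by (simp add: distrib_left[symmetric] mult_left_mono flip: of_nat_add)
  moreover have "c + ?d - M * (s + t) = c - ?d"
    by simp
  then have "\<beta> * ((t - s) * (c - ?d)\<^sup>2) = \<beta> * fidelity M c s t - \<beta> * fidelity M ?d s t"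
    unfolding right_diff_distrib[symmetric] fidelity_diff by (simp add: power2_eq_square)
  ultimately show ?thesis
    using replace_const_piece_le[OF ab(1) \<open>s < t\<close> ab(2) c, of ?d] by linarith
qed

lemma const_piece_between_jumps:
  assumes "s < t" "s \<in> J" "t \<in> J" and c: "AE y in lebesgue. y \<in> {s<..<t} \<longrightarrow> v y = c"
  shows "c = M * (s + t) / 2"
proof -
  have "\<beta> * ((t - s) * (c - M * (s + t) / 2)\<^sup>2) \<le> 0"
    using const_piece_cost[OF assms(1) c] assms(2,3) by simp
  then have "(c - M * (s + t) / 2)\<^sup>2 \<le> 0"
    using \<beta>_pos assms(1) by (simp add: mult_le_0_iff)
  then show ?thesis
    by simp
qed

lemma const_piece_bound:
  assumes "r > 0" and c: "AE y in lebesgue. y \<in> {m - r<..<m + r} \<longrightarrow> v y = c"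
  shows "r * (c - M * m)\<^sup>2 \<le> \<alpha> / \<beta>"
proof -
  have "card ({m - r, m + r} - J) \<le> card {m - r, m + r}"
    by (rule card_mono) auto
  also have "\<dots> \<le> 2"
    by (rule card_insert_le_m1) auto
  finally have "\<alpha> * card ({m - r, m + r} - J) \<le> \<alpha> * 2"
    using \<alpha>_pos by simp
  moreover have "m - r + (m + r) = 2 * m" "m + r - (m - r) = 2 * r"
    by simp_all
  ultimately have "\<beta> * (2 * r * (c - M * m)\<^sup>2) \<le> \<alpha> * 2"
    using const_piece_cost[of "m - r" "m + r"] c \<open>r > 0\<close> by fastforce
  then show ?thesis
    using \<beta>_pos by (simp add: field_simps)
qed

lemma const_on_Ioi_imp_zero:
  assumes c: "AE y in lebesgue. y \<in> {x0<..} \<longrightarrow> v y = c"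
  shows "M = 0 \<and> c = 0"
proof -
  have "R * ((c - M * x0) + (- 2 * M) * R)\<^sup>2 \<le> \<alpha> / \<beta>" if "R > 0" for R
  proof -
    have "AE y in lebesgue. y \<in> {(x0 + 2 * R) - R<..<(x0 + 2 * R) + R} \<longrightarrow> v y = c"
      using c by eventually_elim (use that in auto)
    from const_piece_bound[OF that this] show ?thesis
      by (simp add: algebra_simps)
  qed
  then have "c - M * x0 = 0 \<and> - 2 * M = 0"
    by (rule bounded_mul_sq_imp_zero)
  then show ?thesis
    by simp
qed

lemma const_on_Iio_imp_zero:
  assumes c: "AE y in lebesgue. y \<in> {..<x0} \<longrightarrow> v y = c"
  shows "M = 0 \<and> c = 0"
proof -
  have "R * ((c - M * x0) + (2 * M) * R)\<^sup>2 \<le> \<alpha> / \<beta>" if "R > 0" for R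
  proof -
    have "AE y in lebesgue. y \<in> {(x0 - 2 * R) - R<..<(x0 - 2 * R) + R} \<longrightarrow> v y = c"
      using c by eventually_elim (use that in auto)
    from const_piece_bound[OF that this] show ?thesis
      by (simp add: algebra_simps)
  qed
  then have "c - M * x0 = 0 \<and> 2 * M = 0"
    by (rule bounded_mul_sq_imp_zero)
  then show ?thesis
    by simp
qed

lemma jump_move_right:
  assumes "x \<in> J" "0 < d" "d < e"
    and c1: "AE y in lebesgue. y \<in> {x - e<..<x} \<longrightarrow> v y = c1"
    and c2: "AE y in lebesgue. y \<in> {x<..<x + e} \<longrightarrow> v y = c2"
  shows "fidelity M c2 x (x + d) \<le> fidelity M c1 x (x + d)"
proof -
  let ?u = "\<lambda>y. if y \<in> {x<..<x + d} then c1 else v y"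
  let ?I = "{x - e<..<x + e}"
  have ast: "x - e < x" "x < x + d" "x + d < x + e"
    using assms(2,3) by auto
  have v2: "AE y in lebesgue. y \<in> {x<..<x + d} \<longrightarrow> v y = c2"
    using c2 by eventually_elim (use assms in auto)
  have "AE y in lebesgue. y \<in> {x - d<..<x} \<longrightarrow> ?u y = c1"
    using c1 by eventually_elim (use assms in auto)
  moreover have "AE y in lebesgue. y \<in> {x<..<x + d} \<longrightarrow> ?u y = c1"
    by (rule AE_I2) auto
  ultimately have "x \<notin> jump_set ?u"
    by (rule not_in_jump_set_if_same_sides[OF \<open>0 < d\<close>])
  then have "jump_set ?u \<inter> ?I \<subseteq> (J \<inter> ?I - {x}) \<union> {x + d}"
    using jump_set_replace_Ioo[of x "x + d" c1 v] ast by blast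
  moreover have "x \<in> J \<inter> ?I"
    using assms(1) ast by auto
  ultimately have "card (jump_set ?u \<inter> ?I) \<le> card (J \<inter> ?I)"
    using card_swap_le[OF finite_jumps] by blast
  then have "\<alpha> * card (jump_set ?u \<inter> ?I) \<le> \<alpha> * card (J \<inter> ?I)"
    using \<alpha>_pos by simp
  then have "\<beta> * fidelity M c2 x (x + d) \<le> \<beta> * fidelity M c1 x (x + d)"
    using replace_const_piece_le[OF ast v2, of c1] by linarith
  then show ?thesis
    using \<beta>_pos by simp
qed

lemma jump_move_left:
  assumes "x \<in> J" "0 < d" "d < e"
    and c1: "AE y in lebesgue. y \<in> {x - e<..<x} \<longrightarrow> v y = c1"
    and c2: "AE y in lebesgue. y \<in> {x<..<x + e} \<longrightarrow> v y = c2"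
  shows "fidelity M c1 (x - d) x \<le> fidelity M c2 (x - d) x"
proof -
  let ?u = "\<lambda>y. if y \<in> {x - d<..<x} then c2 else v y"
  let ?I = "{x - e<..<x + e}"
  have ast: "x - e < x - d" "x - d < x" "x < x + e"
    using assms(2,3) by auto
  have v1: "AE y in lebesgue. y \<in> {x - d<..<x} \<longrightarrow> v y = c1"
    using c1 by eventually_elim (use assms in auto)
  have "AE y in lebesgue. y \<in> {x - d<..<x} \<longrightarrow> ?u y = c2"
    by (rule AE_I2) auto
  moreover have "AE y in lebesgue. y \<in> {x<..<x + d} \<longrightarrow> ?u y = c2"
    using c2 by eventually_elim (use assms in auto)
  ultimately have "x \<notin> jump_set ?u"
    by (rule not_in_jump_set_if_same_sides[OF \<open>0 < d\<close>])
  then have "jump_set ?u \<inter> ?I \<subseteq> (J \<inter> ?I - {x}) \<union> {x - d}"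
    using jump_set_replace_Ioo[of "x - d" x c2 v] ast by blast
  moreover have "x \<in> J \<inter> ?I"
    using assms(1) ast by auto
  ultimately have "card (jump_set ?u \<inter> ?I) \<le> card (J \<inter> ?I)"
    using card_swap_le[OF finite_jumps] by blast
  then have "\<alpha> * card (jump_set ?u \<inter> ?I) \<le> \<alpha> * card (J \<inter> ?I)"
    using \<alpha>_pos by simp
  then have "\<beta> * fidelity M c1 (x - d) x \<le> \<beta> * fidelity M c2 (x - d) x"
    using replace_const_piece_le[OF ast v1, of c2] by linarith
  then show ?thesis
    using \<beta>_pos by simp
qed

text \<open>First-order optimality in the position of a jump: moving it by \<open>d\<close> either way changes the
  fidelity by \<open>\<plusminus>d (c\<^sub>1 - c\<^sub>2) (c\<^sub>1 + c\<^sub>2 - 2 M x) + O(d\<^sup>2)\<close>.\<close>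

lemma jump_midpoint:
  assumes "x \<in> J" "e > 0"
    and c1: "AE y in lebesgue. y \<in> {x - e<..<x} \<longrightarrow> v y = c1"
    and c2: "AE y in lebesgue. y \<in> {x<..<x + e} \<longrightarrow> v y = c2"
  shows "c1 + c2 = 2 * M * x"
proof -
  define A where "A = c1 - c2"
  define B where "B = c1 + c2 - 2 * M * x"
  have "A \<noteq> 0"
    using not_in_jump_set_if_same_sides[OF \<open>e > 0\<close> c1] c2 assms(1) by (auto simp: A_def)
  have "\<bar>A * B\<bar> \<le> \<bar>A * M\<bar> * d" if "0 < d" "d < e" for d
  proof -
    have "fidelity M c2 x (x + d) - fidelity M c1 x (x + d) = d * (A * M * d - A * B)"
      unfolding fidelity_diff A_def B_def by (simp add: algebra_simps)
    then have "d * (A * M * d - A * B) \<le> 0"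
      using jump_move_right[OF assms(1) that c1 c2] by linarith
    then have right: "A * M * d \<le> A * B"
      using \<open>0 < d\<close> by (simp add: mult_le_0_iff)
    have "fidelity M c1 (x - d) x - fidelity M c2 (x - d) x = d * (A * B + A * M * d)"
      unfolding fidelity_diff A_def B_def by (simp add: algebra_simps)
    then have "d * (A * B + A * M * d) \<le> 0"
      using jump_move_left[OF assms(1) that c1 c2] by linarith
    then have left: "A * B \<le> - (A * M * d)"
      using \<open>0 < d\<close> by (simp add: mult_le_0_iff)
    have "\<bar>A * B\<bar> \<le> \<bar>A * M * d\<bar>"
      unfolding abs_le_iff using right left abs_ge_self[of "A * M * d"] abs_ge_minus_self[of "A * M * d"]
      by linarith
    also have "\<dots> = \<bar>A * M\<bar> * d"
      using \<open>0 < d\<close> by (simp add: abs_mult)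
    finally show ?thesis .
  qed
  then have "A * B = 0"
    by (intro eq_0_if_abs_le_linear[OF \<open>e > 0\<close>])
  then show ?thesis
    using \<open>A \<noteq> 0\<close> by (simp add: B_def)
qed

lemma jump_spacing:
  assumes "M \<noteq> 0" "p < x" "x < q" "p \<in> J" "x \<in> J" "q \<in> J"
    and "J \<inter> {p<..<x} = {}" "J \<inter> {x<..<q} = {}"
  shows "x - p = q - x"
proof -
  obtain c1 where c1: "AE y in lebesgue. y \<in> {p<..<x} \<longrightarrow> v y = c1"
    using AE_const_between[OF assms(7)] .
  obtain c2 where c2: "AE y in lebesgue. y \<in> {x<..<q} \<longrightarrow> v y = c2"
    using AE_const_between[OF assms(8)] .
  let ?e = "min (x - p) (q - x)"
  have "AE y in lebesgue. y \<in> {x - ?e<..<x} \<longrightarrow> v y = c1"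
    using c1 by eventually_elim auto
  moreover have "AE y in lebesgue. y \<in> {x<..<x + ?e} \<longrightarrow> v y = c2"
    using c2 by eventually_elim auto
  ultimately have "c1 + c2 = 2 * M * x"
    using jump_midpoint[OF assms(5), of ?e] assms(2,3) by simp
  moreover have "c1 = M * (p + x) / 2" "c2 = M * (x + q) / 2"
    using const_piece_between_jumps[OF assms(2,4,5) c1] const_piece_between_jumps[OF assms(3,5,6) c2] .
  moreover have "M * (p + x) / 2 + M * (x + q) / 2 - 2 * M * x = M * ((p + q) / 2 - x)"
    by (simp add: field_simps)
  ultimately have "M * ((p + q) / 2 - x) = 0"
    by simp
  then show ?thesis
    using assms(1) by simp
qed

lemma jumps_on_both_sides:
  assumes "M \<noteq> 0"
  shows "\<exists>j\<in>J. x < j" "\<exists>j\<in>J. j < x"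
proof -
  show "\<exists>j\<in>J. x < j"
  proof (rule ccontr)
    assume "\<not> ?thesis"
    then have "{x<..} \<inter> J = {}"
      by auto
    then obtain c where "AE y in lebesgue. y \<in> {x<..} \<longrightarrow> v y = c"
      using AE_const_if_no_jumps[OF open_greaterThan connected_Ioi] by blast
    then show False
      using const_on_Ioi_imp_zero assms by blast
  qed
  show "\<exists>j\<in>J. j < x"
  proof (rule ccontr)
    assume "\<not> ?thesis"
    then have "{..<x} \<inter> J = {}"
      by auto
    then obtain c where "AE y in lebesgue. y \<in> {..<x} \<longrightarrow> v y = c"
      using AE_const_if_no_jumps[OF open_lessThan connected_Iio] by blast
    then show False
      using const_on_Iio_imp_zero assms by blast
  qed
qed

lemma next_gap_eq:
  assumes "M \<noteq> 0" "p \<in> J" "x \<in> J" "p < x" "J \<inter> {p<..<x} = {}"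
  shows "x + (x - p) \<in> J" "J \<inter> {x<..<x + (x - p)} = {}"
proof -
  obtain j where "j \<in> J" "x < j"
    using jumps_on_both_sides(1)[OF assms(1)] by blast
  then obtain q where q: "q \<in> J" "x < q" "J \<inter> {x<..<q} = {}"
    using obtain_next_in_locally_finite[OF finite_jumps] by blast
  then have "q = x + (x - p)"
    using jump_spacing[OF assms(1,4) q(2) assms(2,3) q(1) assms(5) q(3)] by simp
  then show "x + (x - p) \<in> J" "J \<inter> {x<..<x + (x - p)} = {}"
    using q by simp_all
qed

lemma prev_gap_eq:
  assumes "M \<noteq> 0" "x \<in> J" "q \<in> J" "x < q" "J \<inter> {x<..<q} = {}"
  shows "x - (q - x) \<in> J" "J \<inter> {x - (q - x)<..<x} = {}"
proof -
  obtain j where "j \<in> J" "j < x"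
    using jumps_on_both_sides(2)[OF assms(1)] by blast
  then obtain p where p: "p \<in> J" "p < x" "J \<inter> {p<..<x} = {}"
    using obtain_prev_in_locally_finite[OF finite_jumps] by blast
  then have "p = x - (q - x)"
    using jump_spacing[OF assms(1) p(2) assms(4) p(1) assms(2,3) p(3) assms(5)] by simp
  then show "x - (q - x) \<in> J" "J \<inter> {x - (q - x)<..<x} = {}"
    using p by simp_all
qed

lemma periodic_jumps:
  assumes "M \<noteq> 0" "p \<in> J" "q \<in> J" "p < q" "J \<inter> {p<..<q} = {}"
  defines "L \<equiv> q - p"
  shows "p + of_int k * L \<in> J \<and> J \<inter> {p + of_int k * L<..<p + of_int k * L + L} = {}"
proof -
  define P where "P n \<longleftrightarrow> p + of_int n * L \<in> J \<and> p + of_int n * L + L \<in> J \<and>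
    J \<inter> {p + of_int n * L<..<p + of_int n * L + L} = {}" for n :: int
  have "L > 0"
    using assms(4) by (simp add: L_def)
  have "P n" for n
  proof (induction n rule: int_induct[where k=0])
    case base
    show ?case
      using assms by (simp add: P_def L_def)
  next
    case (step1 i)
    have succ_index: "p + of_int (i + 1) * L = p + of_int i * L + L"
      by (simp add: algebra_simps)
    show ?case
      unfolding P_def succ_index
      using next_gap_eq[OF assms(1), of "p + of_int i * L" "p + of_int i * L + L"] step1(2) \<open>L > 0\<close>
      by (simp add: P_def)
  next
    case (step2 i)
    have pred_index: "p + of_int (i - 1) * L = p + of_int i * L - L"
      by (simp add: algebra_simps)
    show ?case
      unfolding P_def pred_index
      using prev_gap_eq[OF assms(1), of "p + of_int i * L" "p + of_int i * L + L"] step2(2) \<open>L > 0\<close>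
      by (simp add: P_def)
  qed
  then show ?thesis
    by (simp add: P_def)
qed

lemma AE_eq_stair:
  assumes "M \<noteq> 0"
  obtains L z where "L > 0" "AE y in lebesgue. v y = stair M L z y"
proof -
  obtain p where "p \<in> J"
    using jumps_on_both_sides(1)[OF assms, of 0] by blast
  moreover obtain j where "j \<in> J" "p < j"
    using jumps_on_both_sides(1)[OF assms, of p] by blast
  ultimately obtain q where q: "q \<in> J" "p < q" "J \<inter> {p<..<q} = {}"
    using obtain_next_in_locally_finite[OF finite_jumps] by blast
  define L where "L = q - p"
  have "L > 0"
    using q(2) by (simp add: L_def)
  note periodic = periodic_jumps[OF assms \<open>p \<in> J\<close> q, folded L_def]
  have "AE y in lebesgue. y \<in> {p + of_int k * L<..<p + of_int k * L + L} \<longrightarrow> v y = M * (p + of_int k * L + L/2)"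
    for k :: int
  proof -
    let ?a = "p + of_int k * L"
    obtain c where c: "AE y in lebesgue. y \<in> {?a<..<?a + L} \<longrightarrow> v y = c"
      using AE_const_between periodic[of k] by blast
    have "?a + L \<in> J"
      using periodic[of "k + 1"] by (simp add: algebra_simps)
    then have "c = M * (?a + (?a + L)) / 2"
      using const_piece_between_jumps[OF _ _ _ c] periodic[of k] \<open>L > 0\<close> by simp
    also have "\<dots> = M * (?a + L/2)"
      by (simp add: field_simps)
    finally show ?thesis
      using c by simp
  qed
  then show thesis
    using that[OF \<open>L > 0\<close> AE_eq_stair_if_steps[OF \<open>L > 0\<close>]] by blast
qed

lemma zero_slope_right_value:
  assumes "M = 0" "x \<in> J"
  shows "\<exists>e>0. AE y in lebesgue. y \<in> {x<..<x + e} \<longrightarrow> v y = 0"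
proof (cases "\<exists>j\<in>J. x < j")
  case True
  then obtain q where q: "q \<in> J" "x < q" "J \<inter> {x<..<q} = {}"
    using obtain_next_in_locally_finite[OF finite_jumps] by blast
  then obtain c where c: "AE y in lebesgue. y \<in> {x<..<q} \<longrightarrow> v y = c"
    using AE_const_between by blast
  then have "c = 0"
    using const_piece_between_jumps[OF q(2) assms(2) q(1) c] assms(1) by simp
  then show ?thesis
    using c q(2) by (intro exI[of _ "q - x"]) auto
next
  case False
  then have "{x<..} \<inter> J = {}"
    by auto
  then obtain c where c: "AE y in lebesgue. y \<in> {x<..} \<longrightarrow> v y = c"
    using AE_const_if_no_jumps[OF open_greaterThan connected_Ioi] by blast
  then have "c = 0"
    using const_on_Ioi_imp_zero by blast
  then have "AE y in lebesgue. y \<in> {x<..<x + 1} \<longrightarrow> v y = 0"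
    using c by eventually_elim (use \<open>c = 0\<close> in auto)
  then show ?thesis
    by (intro exI[of _ 1]) auto
qed

lemma zero_slope_left_value:
  assumes "M = 0" "x \<in> J"
  shows "\<exists>e>0. AE y in lebesgue. y \<in> {x - e<..<x} \<longrightarrow> v y = 0"
proof (cases "\<exists>j\<in>J. j < x")
  case True
  then obtain p where p: "p \<in> J" "p < x" "J \<inter> {p<..<x} = {}"
    using obtain_prev_in_locally_finite[OF finite_jumps] by blast
  then obtain c where c: "AE y in lebesgue. y \<in> {p<..<x} \<longrightarrow> v y = c"
    using AE_const_between by blast
  then have "c = 0"
    using const_piece_between_jumps[OF p(2) p(1) assms(2) c] assms(1) by simp
  then show ?thesis
    using c p(2) by (intro exI[of _ "x - p"]) auto
next
  case False
  then have "{..<x} \<inter> J = {}"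
    by auto
  then obtain c where c: "AE y in lebesgue. y \<in> {..<x} \<longrightarrow> v y = c"
    using AE_const_if_no_jumps[OF open_lessThan connected_Iio] by blast
  then have "c = 0"
    using const_on_Iio_imp_zero by blast
  then have "AE y in lebesgue. y \<in> {x - 1<..<x} \<longrightarrow> v y = 0"
    using c by eventually_elim (use \<open>c = 0\<close> in auto)
  then show ?thesis
    by (intro exI[of _ 1]) auto
qed

lemma AE_eq_0_if_zero_slope:
  assumes "M = 0"
  shows "AE y in lebesgue. v y = 0"
proof -
  have "J = {}"
  proof (rule ccontr)
    assume "J \<noteq> {}"
    then obtain x where "x \<in> J"
      by blast
    obtain e1 e2 where "e1 > 0" "e2 > 0"
      and right: "AE y in lebesgue. y \<in> {x<..<x + e1} \<longrightarrow> v y = 0"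
      and left: "AE y in lebesgue. y \<in> {x - e2<..<x} \<longrightarrow> v y = 0"
      using zero_slope_right_value[OF assms \<open>x \<in> J\<close>] zero_slope_left_value[OF assms \<open>x \<in> J\<close>] by blast
    have "AE y in lebesgue. y \<in> {x - min e1 e2<..<x} \<longrightarrow> v y = 0"
      using left by eventually_elim auto
    moreover have "AE y in lebesgue. y \<in> {x<..<x + min e1 e2} \<longrightarrow> v y = 0"
      using right by eventually_elim auto
    ultimately have "x \<notin> J"
      using \<open>e1 > 0\<close> \<open>e2 > 0\<close> by (intro not_in_jump_set_if_same_sides[of "min e1 e2"]) auto
    then show False
      using \<open>x \<in> J\<close> by blast
  qed
  then obtain c where c: "AE y in lebesgue. y \<in> UNIV \<longrightarrow> v y = c"
    using AE_const_if_no_jumps[OF open_UNIV connected_UNIV] by blast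
  then have "AE y in lebesgue. y \<in> {0<..} \<longrightarrow> v y = c"
    by eventually_elim auto
  then have "c = 0"
    using const_on_Ioi_imp_zero by blast
  then show ?thesis
    using c by simp
qed

end

section \<open>The optimal period\<close>

lemma le_at_rational_multiples_imp_le:
  fixes \<phi> :: "real \<Rightarrow> real" and L x :: real
  assumes "L > 0" "x > 0" "isCont \<phi> x"
    and le: "\<And>N N' :: nat. 1 \<le> N \<Longrightarrow> 1 \<le> N' \<Longrightarrow> \<phi> L \<le> \<phi> (real N * L / real N')"
  shows "\<phi> L \<le> \<phi> x"
proof -
  define N where "N n = nat \<lceil>x * real (Suc n) / L\<rceil>" for n
  define l where "l n = real (N n) * L / real (Suc n)" for n
  have N: "x * real (Suc n) / L \<le> real (N n)" "real (N n) < x * real (Suc n) / L + 1" for n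
    using assms(1,2) by (auto simp: N_def) linarith+
  have "N n \<ge> 1" for n
  proof -
    have "1 \<le> \<lceil>x * real (Suc n) / L\<rceil>"
      using assms(1,2) by simp
    then show ?thesis
      unfolding N_def by linarith
  qed
  have l: "x \<le> l n" "l n \<le> x + L * inverse (real (Suc n))" for n
  proof -
    have "x * real (Suc n) \<le> real (N n) * L"
      using N(1)[of n] assms(1) by (simp add: pos_divide_le_eq)
    then show "x \<le> l n"
      unfolding l_def by (simp add: pos_le_divide_eq)
    have "real (N n) * L \<le> (x * real (Suc n) / L + 1) * L"
      using N(2)[of n] assms(1) by (intro mult_right_mono) auto
    then have "real (N n) * L \<le> x * real (Suc n) + L"
      using assms(1) by (simp add: distrib_right)
    then have "l n \<le> (x * real (Suc n) + L) / real (Suc n)"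
      unfolding l_def by (intro divide_right_mono) auto
    also have "\<dots> = x + L * inverse (real (Suc n))"
      by (simp add: field_simps)
    finally show "l n \<le> x + L * inverse (real (Suc n))" .
  qed
  have "(\<lambda>n. x + L * inverse (real (Suc n))) \<longlonglongrightarrow> x + L * 0"
    by (intro tendsto_add tendsto_mult tendsto_const LIMSEQ_inverse_real_of_nat)
  then have "l \<longlonglongrightarrow> x"
    using l by (intro tendsto_sandwich[OF _ _ tendsto_const, of x l] always_eventually) auto
  then have "(\<lambda>n. \<phi> (l n)) \<longlonglongrightarrow> \<phi> x"
    by (rule isCont_tendsto_compose[OF assms(3)])
  moreover have "\<phi> L \<le> \<phi> (l n)" for n
    unfolding l_def using le[OF \<open>N n \<ge> 1\<close>, of "Suc n"] by simp
  ultimately show ?thesis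
    by (intro LIMSEQ_le_const) auto
qed

lemma stair_periods_cost_le:
  assumes "L > 0" "M \<noteq> 0" "1 \<le> N" "1 \<le> N'"
    and minimizer: "entire_local_min \<alpha> \<beta> (\<lambda>x. M * x) (stair M L z)"
  shows "real N * (\<alpha> + \<beta> * M\<^sup>2 * L^3 / 12) \<le> real N' * (\<alpha> + \<beta> * M\<^sup>2 * (real N * L / real N')^3 / 12)"
proof -
  define l where "l = real N * L / real N'"
  have "l > 0" and ends: "z + real N' * l = z + real N * L"
    using assms(1,3,4) by (auto simp: l_def)
  have "z < z + real N * L"
    using assms(1,3) by simp
  let ?G = "G \<alpha> \<beta> (\<lambda>x. M * x) z (z + real N * L)"
  have "local_min \<alpha> \<beta> (\<lambda>x. M * x) z (z + real N * L) (stair M L z)"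
    using minimizer \<open>z < z + real N * L\<close> by (simp add: entire_local_min_def)
  moreover have "step_on z (z + real N * L) (stair M l z)"
    using S_loc_stair[OF \<open>l > 0\<close> assms(2)] \<open>z < z + real N * L\<close> by (simp add: S_loc_def)
  moreover have "trace_left z (stair M l z) = trace_left z (stair M L z)"
    using stair_traces_at_centre(1)[of _ z 0 M] \<open>l > 0\<close> assms(1) by simp
  moreover have "trace_right (z + real N * L) (stair M l z) = trace_right (z + real N * L) (stair M L z)"
    using stair_traces_at_centre(2)[OF \<open>l > 0\<close>, of z "int N'" M]
      stair_traces_at_centre(2)[OF assms(1), of z "int N" M] ends by simp
  ultimately have "?G (stair M L z) \<le> ?G (stair M l z)"
    unfolding local_min_def by blast
  also have "?G (stair M l z) = real N' * (\<alpha> + \<beta> * M\<^sup>2 * l^3 / 12)"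
    using G_stair_periods[OF \<open>l > 0\<close> assms(2,4), of \<alpha> \<beta> z] ends by simp
  finally show ?thesis
    using G_stair_periods[OF assms(1,2,3), of \<alpha> \<beta> z] by (simp add: l_def)
qed

context calibrated
begin

lemma stair_period_eq:
  assumes "L > 0" "entire_local_min \<alpha> \<beta> (\<lambda>x. M * x) (stair M L z)"
  shows "L = 2 * H"
proof -
  define K where "K = \<beta> * M\<^sup>2 / 12"
  define \<phi> where "\<phi> l = (\<alpha> + K * l^3) / l" for l
  have "K > 0"
    using \<beta>_pos M_nonzero by (simp add: K_def)
  have "\<phi> L \<le> \<phi> (real N * L / real N')" if "1 \<le> N" "1 \<le> N'" for N N' :: nat
  proof -
    define l where "l = real N * L / real N'"
    have "l > 0" "real N * L = real N' * l"
      using that assms(1) by (simp_all add: l_def)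
    then have "real N * L * \<phi> l = real N' * (\<alpha> + K * l^3)"
      by (simp add: \<phi>_def)
    moreover have "real N * L * \<phi> L = real N * (\<alpha> + K * L^3)"
      using assms(1) by (simp add: \<phi>_def)
    moreover have "real N * (\<alpha> + K * L^3) \<le> real N' * (\<alpha> + K * l^3)"
      using stair_periods_cost_le[OF assms(1) M_nonzero that assms(2)] by (simp add: K_def l_def)
    ultimately have "real N * L * \<phi> L \<le> real N * L * \<phi> l"
      by linarith
    then show ?thesis
      using that assms(1) by (simp add: l_def)
  qed
  moreover have "isCont \<phi> (2 * H)"
    using H_pos unfolding \<phi>_def by (intro continuous_intros) auto
  ultimately have "\<phi> L \<le> \<phi> (2 * H)"
    using le_at_rational_multiples_imp_le[OF assms(1)] H_pos by simp
  moreover have "\<phi> L - \<phi> (2 * H) = K * (L - 2 * H)\<^sup>2 * (L + 4 * H) / L"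
    using assms(1) H_pos unfolding \<phi>_def \<alpha>_eq K_def
    by (simp add: field_simps power2_eq_square power3_eq_cube)
  ultimately have "K * (L - 2 * H)\<^sup>2 * (L + 4 * H) / L \<le> 0"
    by linarith
  then have "(L - 2 * H)\<^sup>2 \<le> 0"
    using \<open>K > 0\<close> assms(1) H_pos by (simp add: divide_le_0_iff mult_le_0_iff)
  then show ?thesis
    by simp
qed

lemma entire_local_min_iff_AE_stair:
  "entire_local_min \<alpha> \<beta> (\<lambda>x. M * x) u \<longleftrightarrow> (\<exists>z. AE x in lebesgue. u x = stair M (2 * H) z x)"
proof
  assume u: "entire_local_min \<alpha> \<beta> (\<lambda>x. M * x) u"
  have "\<alpha> > 0"
    unfolding \<alpha>_eq using \<beta>_pos M_nonzero H_pos by (intro mult_pos_pos) auto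
  then interpret entire_minimizer \<alpha> \<beta> M u
    using \<beta>_pos u by unfold_locales
  obtain L z where "L > 0" and u_stair: "AE x in lebesgue. u x = stair M L z x"
    using AE_eq_stair[OF M_nonzero] .
  then have "entire_local_min \<alpha> \<beta> (\<lambda>x. M * x) (stair M L z)"
    using u entire_local_min_AE_cong by blast
  then have "L = 2 * H"
    by (rule stair_period_eq[OF \<open>L > 0\<close>])
  then show "\<exists>z. AE x in lebesgue. u x = stair M (2 * H) z x"
    using u_stair by blast
next
  assume "\<exists>z. AE x in lebesgue. u x = stair M (2 * H) z x"
  then show "entire_local_min \<alpha> \<beta> (\<lambda>x. M * x) u"
    using entire_local_min_AE_cong entire_local_min_stair by blast
qed

end

lemma Obl_eq_range_stair:
  assumes "H > 0"
  shows "Obl H (M * H) = range (stair M (2 * H))"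
proof -
  have oblique: "(\<lambda>x. staircase_HV H (M * H) (x - H * t) + M * H * t) = stair M (2 * H) (H * t)" for t
  proof
    fix x
    have index: "((x - H * t) / H + 1) / 2 = (x - H * t) / (2 * H) + 1/2"
      using assms by (simp add: field_simps)
    show "staircase_HV H (M * H) (x - H * t) + M * H * t = stair M (2 * H) (H * t) x"
      unfolding staircase_HV_def staircase_def index stair_def by (simp add: algebra_simps)
  qed
  have reduce: "\<exists>t\<in>{-1..1}. stair M (2 * H) z = stair M (2 * H) (H * t)" for z
  proof -
    define k where "k = \<lfloor>(z / H + 1) / 2\<rfloor>"
    define t where "t = z / H - 2 * of_int k"
    have "of_int k \<le> (z / H + 1) / 2" "(z / H + 1) / 2 < of_int k + 1"
      unfolding k_def by linarith+
    then have "t \<in> {-1..1}"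
      by (auto simp: t_def)
    moreover have "z = H * t + of_int k * (2 * H)"
      using assms by (simp add: t_def field_simps)
    then have "stair M (2 * H) z = stair M (2 * H) (H * t)"
      using stair_shift[of "2 * H" M "H * t" k] assms by simp
    ultimately show ?thesis
      by blast
  qed
  show ?thesis
  proof (intro equalityI subsetI)
    fix w assume "w \<in> Obl H (M * H)"
    then show "w \<in> range (stair M (2 * H))"
      unfolding Obl_def oblique by auto
  next
    fix w assume "w \<in> range (stair M (2 * H))"
    then obtain z where "w = stair M (2 * H) z"
      by blast
    then obtain t where "t \<in> {-1..1}" "w = stair M (2 * H) (H * t)"
      using reduce[of z] by blast
    then show "w \<in> Obl H (M * H)"
      unfolding Obl_def oblique by blast
  qed
qed

lemma entire_local_min_zero_slope_iff:
  assumes "\<alpha> > 0" "\<beta> > 0"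
  shows "entire_local_min \<alpha> \<beta> (\<lambda>x. 0) u \<longleftrightarrow> (AE x in lebesgue. u x = 0)"
proof
  assume "entire_local_min \<alpha> \<beta> (\<lambda>x. 0) u"
  then interpret entire_minimizer \<alpha> \<beta> 0 u
    using assms by unfold_locales simp_all
  show "AE x in lebesgue. u x = 0"
    by (rule AE_eq_0_if_zero_slope) simp
next
  have no_jumps: "jump_set (\<lambda>x::real. 0::real) = {}"
    using not_in_jump_setI[of 1 _ "\<lambda>x. 0" 0] by auto
  have "G \<alpha> \<beta> (\<lambda>x. 0) a b (\<lambda>x. 0) = 0" for a b
    by (simp add: G_def no_jumps)
  moreover have "0 \<le> G \<alpha> \<beta> (\<lambda>x. 0) a b w" for a b w
    using assms by (intro G_nonneg) auto
  ultimately have le: "G \<alpha> \<beta> (\<lambda>x. 0) a b (\<lambda>x. 0) \<le> G \<alpha> \<beta> (\<lambda>x. 0) a b w" for a b w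
    by simp
  have "entire_local_min \<alpha> \<beta> (\<lambda>x. 0) (\<lambda>x. 0)"
    unfolding entire_local_min_def S_loc_def local_min_def step_on_def no_jumps
    using le by auto
  moreover assume "AE x in lebesgue. u x = 0"
  then have "entire_local_min \<alpha> \<beta> (\<lambda>x. 0) u \<longleftrightarrow> entire_local_min \<alpha> \<beta> (\<lambda>x. 0) (\<lambda>x. 0)"
    by (rule entire_local_min_AE_cong)
  ultimately show "entire_local_min \<alpha> \<beta> (\<lambda>x. 0) u"
    by simp
qed

lemma half_cube_root:
  fixes q H :: real
  assumes "q > 0" "H = 1/2 * root 3 q"
  shows "H > 0" "8 * H^3 = q"
proof -
  have "root 3 q > 0"
    using assms(1) by simp
  then show "H > 0"
    using assms(2) by linarith
  have "q = (root 3 q)^3"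
    by (simp add: odd_real_root_pow)
  also have "root 3 q = 2 * H"
    using assms(2) by simp
  finally show "8 * H^3 = q"
    by (simp add: power_mult_distrib)
qed

theorem proposition4p4:
  fixes \<alpha> \<beta> M H V :: real
  assumes "\<alpha> > 0" and "\<beta> > 0"
    and "H = 1/2 * root 3 (6 * \<alpha> / (\<beta> * M\<^sup>2))" and "V = M * H"
  shows "\<forall>u. entire_local_min \<alpha> \<beta> (\<lambda>x. M * x) u \<longleftrightarrow>
           (\<exists>w \<in> Obl H V. AE x in lebesgue. u x = w x)"
proof (cases "M = 0")
  case True
  then have "Obl H V = {\<lambda>x. 0}"
    using assms(3,4) unfolding Obl_def staircase_HV_def by (auto intro: exI[of _ 0])
  then show ?thesis
    using entire_local_min_zero_slope_iff[OF assms(1,2)] True by simp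
next
  case False
  then have "6 * \<alpha> / (\<beta> * M\<^sup>2) > 0"
    using assms(1,2) by simp
  from half_cube_root[OF this assms(3)] have "H > 0" and "\<alpha> = 4/3 * \<beta> * M\<^sup>2 * H^3"
    using assms(2) False by (auto simp: field_simps)
  then interpret calibrated \<alpha> \<beta> M H
    using False assms(2) by unfold_locales
  show ?thesis
    using entire_local_min_iff_AE_stair Obl_eq_range_stair[OF \<open>H > 0\<close>] assms(4) by auto
qed

end
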